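(* For $n\ge1$ let $T_n=\{(n-r,1^r):0\le r\le n-1\}$ be the set of hook partitions of $n$, and let $Hk_n=\sum_{\mu\in T_n}p_\mu$. Then $Hk_n$ is Schur-positive. Moreover, if $n$ is odd then every Schur function $s_\lambda$, $\lambda\vdash n$, appears in $Hk_n$ with positive coefficient, while if $n$ is even then every $s_\lambda$ with $\lambda\vdash n$ appears with positive coefficient except $s_{(1^n)}$, which does not appear.
   Context: $p_\mu=\prod_i p_{\mu_i}$ denotes the power sum symmetric function; Schur-positive means a nonnegative integer combination of Schur functions $s_\lambda$. *)

theory Defs
  imports Main
begin

text \<open>Symmetric functions (of bounded degree) in countably many variables x_0, x_1, ...
  are represented by their coefficient functions: a formal power series is a map
  from exponent vectors (alpha :: nat => nat, the monomial prod_i x_i^(alpha i))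
  to integer coefficients.  Only finitely supported exponent vectors correspond to
  monomials; all series below vanish on the others.\<close>

type_synonym fps_coeffs = "(nat \<Rightarrow> nat) \<Rightarrow> int"

definition one_ser :: fps_coeffs where
  "one_ser \<alpha> = (if \<alpha> = (%_. 0) then 1 else 0)"

definition mult_ser :: "fps_coeffs \<Rightarrow> fps_coeffs \<Rightarrow> fps_coeffs" where
  "mult_ser f g \<alpha> = (\<Sum>\<beta>\<in>{\<beta>. \<forall>i. \<beta> i \<le> \<alpha> i}. f \<beta> * g (%i. \<alpha> i - \<beta> i))"

definition power_sum :: "nat \<Rightarrow> fps_coeffs" where
  "power_sum k \<alpha> = (if \<exists>j. \<alpha> = (%i. if i = j then k else 0) then 1 else 0)"

definition power_sum_part :: "nat list \<Rightarrow> fps_coeffs" where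
  "power_sum_part mu = foldr (%k f. mult_ser (power_sum k) f) mu one_ser"

definition is_partition :: "nat \<Rightarrow> nat list \<Rightarrow> bool" where
  "is_partition n la \<longleftrightarrow> sorted_wrt (\<ge>) la \<and> 0 \<notin> set la \<and> sum_list la = n"

definition cells :: "nat list \<Rightarrow> (nat \<times> nat) set" where
  "cells la = {(i, j). i < length la \<and> j < la ! i}"

definition ssyt :: "nat list \<Rightarrow> (nat \<Rightarrow> nat) \<Rightarrow> ((nat \<times> nat) \<Rightarrow> nat) set" where
  "ssyt la \<alpha> = {T. (\<forall>c. c \<notin> cells la \<longrightarrow> T c = 0)
      \<and> (\<forall>i j. (i, Suc j) \<in> cells la \<longrightarrow> T (i, j) \<le> T (i, Suc j))
      \<and> (\<forall>i j. (Suc i, j) \<in> cells la \<longrightarrow> T (i, j) < T (Suc i, j))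
      \<and> (\<forall>k. card {c \<in> cells la. T c = k} = \<alpha> k)}"

definition schur :: "nat list \<Rightarrow> fps_coeffs" where
  "schur la \<alpha> = int (card (ssyt la \<alpha>))"

definition hook :: "nat \<Rightarrow> nat \<Rightarrow> nat list" where
  "hook n r = (n - r) # replicate r 1"

definition Hk :: "nat \<Rightarrow> fps_coeffs" where
  "Hk n \<alpha> = (\<Sum>r<n. power_sum_part (hook n r) \<alpha>)"

end

theory Submission
  imports Defs
begin

text \<open>Since \<open>p_(n+1-r,1^r) = p_1 p_(n+1-r,1^(r-1))\<close> for \<open>r \<ge> 1\<close>, we have
  \<open>Hk_(n+1) = p_1 Hk_n + p_(n+1)\<close>.  By Pieri's rule \<open>p_1 s_mu\<close> is the sum of \<open>s_la\<close> over the
  shapes \<open>la\<close> obtained from \<open>mu\<close> by adding a box, and by the Murnaghan--Nakayama rule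
  \<open>p_m = \<Sum>i<m. (-1)^i s_(m-i,1^i)\<close>.  Hence the coefficient \<open>c_(n+1)(la)\<close> of \<open>s_la\<close> in
  \<open>Hk_(n+1)\<close> is the sum of \<open>c_n(mu)\<close> over the shapes \<open>mu\<close> below \<open>la\<close>, plus \<open>(-1)^i\<close> if \<open>la\<close>
  is the hook \<open>(n+1-i,1^i)\<close>.  Induction on \<open>n\<close>: a non-hook \<open>la\<close> lies above some \<open>mu \<noteq> (1^n)\<close>
  (remove a box from its last row), so \<open>c_(n+1)(la) \<ge> 1\<close>; for a hook the sign is compensated by
  its two lower neighbours, using \<open>c_n(1^n) = [n odd]\<close> and the explicit value of
  \<open>c_n(2,1^(n-2))\<close>.  Both Pieri's rule and the Murnaghan--Nakayama rule for \<open>p_m\<close> are derived,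
  coefficient by coefficient, from the branching rule for semistandard tableaux: removing the
  largest letter from a tableau of shape \<open>la\<close> leaves one of a shape \<open>ka\<close> with \<open>la/ka\<close> a
  horizontal strip.\<close>

section \<open>Partitions as row-length functions\<close>

definition row_len :: "nat list \<Rightarrow> nat \<Rightarrow> nat" where
  "row_len la i = (if i < length la then la ! i else 0)"

definition partitions :: "nat \<Rightarrow> nat list set" where
  "partitions n = {la. is_partition n la}"

definition interlaces :: "(nat \<Rightarrow> nat) \<Rightarrow> (nat \<Rightarrow> nat) \<Rightarrow> bool" where
  "interlaces g f \<longleftrightarrow> (\<forall>i. f (Suc i) \<le> g i \<and> g i \<le> f i)"

definition horiz_strip :: "nat list \<Rightarrow> nat list \<Rightarrow> bool" where
  "horiz_strip ka la \<longleftrightarrow> interlaces (row_len ka) (row_len la)"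

lemma sum_list_partition: "is_partition n la \<Longrightarrow> sum_list la = n"
  by (simp add: is_partition_def)

lemma cells_row_len: "cells la = {(i, j). j < row_len la i}"
  unfolding cells_def row_len_def by (auto split: if_splits)

lemma row_len_pos_iff: "is_partition n la \<Longrightarrow> 0 < row_len la i \<longleftrightarrow> i < length la"
  unfolding is_partition_def row_len_def by (auto simp: in_set_conv_nth)

lemma antimono_row_len: "is_partition n la \<Longrightarrow> antimono (row_len la)"
  unfolding antimono_iff_le_Suc is_partition_def row_len_def sorted_wrt_iff_nth_less by auto

lemma sum_list_eq_sum_row_len:
  assumes "length la \<le> N"
  shows "sum_list la = (\<Sum>i<N. row_len la i)"
proof -
  have "sum_list la = (\<Sum>i<length la. row_len la i)"
    by (simp add: sum_list_sum_nth atLeast0LessThan row_len_def)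
  also have "\<dots> = (\<Sum>i<N. row_len la i)"
    using assms by (intro sum.mono_neutral_left) (auto simp: row_len_def)
  finally show ?thesis .
qed

lemma finite_cells: "finite (cells la)"
proof -
  have "cells la \<subseteq> {..<length la} \<times> {..<Max (insert 0 (set la))}"
    unfolding cells_def by (auto intro!: order.strict_trans2[OF _ Max_ge])
  thus ?thesis by (rule finite_subset) auto
qed

lemma card_cells: "card (cells la) = sum_list la"
proof -
  have "cells la = (\<Union>i<length la. {i} \<times> {..<la ! i})" unfolding cells_def by auto
  hence "card (cells la) = (\<Sum>i<length la. card ({i} \<times> {..<la ! i}))"
    by (simp only:) (rule card_UN_disjoint; blast)
  thus ?thesis by (simp add: sum_list_sum_nth atLeast0LessThan)
qed

lemma partition_eqI:
  assumes "is_partition n la" "is_partition m lb" "row_len la = row_len lb"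
  shows "la = lb"
proof -
  have "length la = length lb"
    using assms row_len_pos_iff[OF assms(1)] row_len_pos_iff[OF assms(2)]
    by (metis linorder_neqE_nat less_irrefl)
  moreover have "\<forall>i<length la. la ! i = lb ! i"
    using assms(3) \<open>length la = length lb\<close> unfolding row_len_def by metis
  ultimately show ?thesis by (simp add: list_eq_iff_nth_eq)
qed

lemma partition_eqI_cells:
  assumes "is_partition n la" "is_partition m lb" "cells la = cells lb"
  shows "la = lb"
proof -
  have "row_len la i = row_len lb i" for i
  proof -
    have "\<forall>j. (j < row_len la i) = (j < row_len lb i)" using assms(3) unfolding cells_row_len by blast
    thus ?thesis by (metis linorder_neqE_nat less_irrefl)
  qed
  thus ?thesis using partition_eqI assms by blast
qed

lemma partition_with_row_len:
  assumes f: "antimono f" and zero: "\<forall>i\<ge>N. f i = 0"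
  obtains la where "is_partition (\<Sum>i<N. f i) la" "row_len la = f"
proof -
  define la where "la = takeWhile (\<lambda>x. 0 < x) (map f [0..<N])"
  define L where "L = length la"
  have LN: "L \<le> N"
    unfolding L_def la_def by (metis length_map length_takeWhile_le length_upt minus_nat.diff_0)
  have "la = take L (map f [0..<N])" unfolding L_def la_def by (metis takeWhile_eq_take)
  hence nth: "i < L \<Longrightarrow> la ! i = f i" for i using LN by simp
  have beyond: "f i = 0" if "L \<le> i" for i
  proof (cases "L < N")
    case True
    have "\<not> 0 < map f [0..<N] ! L"
      using nth_length_takeWhile[of "\<lambda>x. 0 < x" "map f [0..<N]"] True LN
      unfolding L_def la_def by simp
    hence "f L = 0" using True by simp
    thus ?thesis using antimonoD[OF f that] by simp
  next
    case False
    thus ?thesis using that LN zero by auto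
  qed
  have row: "row_len la = f"
    by (rule ext) (auto simp: row_len_def L_def[symmetric] nth beyond)
  have "0 \<notin> set la" unfolding la_def by (auto dest: set_takeWhileD)
  moreover have "sorted_wrt (\<ge>) la"
    unfolding sorted_wrt_iff_nth_less using antimonoD[OF f] nth L_def by (simp add: less_imp_le)
  moreover have "sum_list la = (\<Sum>i<N. f i)"
    using sum_list_eq_sum_row_len[of la N] row LN L_def by simp
  ultimately show ?thesis using that row unfolding is_partition_def by simp
qed

lemma inj_on_row_len: "inj_on row_len (partitions n)"
  by (rule inj_onI) (auto simp: partitions_def intro: partition_eqI)

lemma finite_partitions: "finite (partitions n)"
proof -
  have "partitions n \<subseteq> {xs. set xs \<subseteq> {..n} \<and> length xs \<le> n}"
  proof
    fix la assume "la \<in> partitions n"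
    hence "sum_list la = n" "0 \<notin> set la" by (auto simp: partitions_def is_partition_def)
    moreover have "x \<in> set la \<Longrightarrow> x \<le> sum_list la" for x by (simp add: member_le_sum_list)
    moreover have "length la \<le> sum_list la" using \<open>0 \<notin> set la\<close>
    proof (induction la)
      case (Cons a la) thus ?case by (cases a) auto
    qed simp
    ultimately show "la \<in> {xs. set xs \<subseteq> {..n} \<and> length xs \<le> n}" by auto
  qed
  thus ?thesis by (rule finite_subset) (rule finite_lists_length_le, simp)
qed

section \<open>Semistandard tableaux and the branching rule\<close>

definition kostka :: "nat list \<Rightarrow> (nat \<Rightarrow> nat) \<Rightarrow> nat" where
  "kostka la \<alpha> = card (ssyt la \<alpha>)"

lemma ssytD:
  assumes "T \<in> ssyt la \<alpha>"
  shows "\<And>c. c \<notin> cells la \<Longrightarrow> T c = 0"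
    "\<And>i j. (i, Suc j) \<in> cells la \<Longrightarrow> T (i, j) \<le> T (i, Suc j)"
    "\<And>i j. (Suc i, j) \<in> cells la \<Longrightarrow> T (i, j) < T (Suc i, j)"
    "\<And>k. card {c \<in> cells la. T c = k} = \<alpha> k"
  using assms unfolding ssyt_def by auto

lemma ssyt_content_pos:
  assumes "T \<in> ssyt la \<alpha>" "c \<in> cells la"
  shows "0 < \<alpha> (T c)"
proof -
  have "{c' \<in> cells la. T c' = T c} \<noteq> {}" using assms(2) by blast
  hence "card {c' \<in> cells la. T c' = T c} > 0" using finite_cells[of la] by (simp add: card_gt_0_iff)
  thus ?thesis using ssytD(4)[OF assms(1)] by simp
qed

lemma ssyt_entry_le:
  assumes "T \<in> ssyt la \<alpha>" "c \<in> cells la" "\<forall>k>m. \<alpha> k = 0"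
  shows "T c \<le> m"
proof (rule ccontr)
  assume "\<not> T c \<le> m"
  hence "\<alpha> (T c) = 0" using assms(3) by simp
  thus False using ssyt_content_pos[OF assms(1,2)] by simp
qed

lemma cells_row_closed: "(i, j') \<in> cells la \<Longrightarrow> j \<le> j' \<Longrightarrow> (i, j) \<in> cells la"
  unfolding cells_row_len by auto

lemma cells_col_closed: "is_partition n la \<Longrightarrow> (i', j) \<in> cells la \<Longrightarrow> i \<le> i' \<Longrightarrow> (i, j) \<in> cells la"
  unfolding cells_row_len using antimonoD[OF antimono_row_len] by (auto intro: order.strict_trans2)

lemma ssyt_row_mono:
  assumes "T \<in> ssyt la \<alpha>" "(i, j') \<in> cells la" "j \<le> j'"
  shows "T (i, j) \<le> T (i, j')"
  using assms(2,3)
proof (induction j')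
  case (Suc j')
  show ?case
  proof (cases "j = Suc j'")
    case False
    hence "T (i, j) \<le> T (i, j')" using Suc cells_row_closed[OF Suc.prems(1)] by simp
    also have "\<dots> \<le> T (i, Suc j')" using ssytD(2)[OF assms(1) Suc.prems(1)] .
    finally show ?thesis .
  qed simp
qed simp

lemma ssyt_empty_if_infinite:
  assumes "infinite {k. \<alpha> k \<noteq> 0}"
  shows "ssyt la \<alpha> = {}"
proof (rule ccontr)
  assume "ssyt la \<alpha> \<noteq> {}"
  then obtain T where T: "T \<in> ssyt la \<alpha>" by blast
  have "{k. \<alpha> k \<noteq> 0} \<subseteq> T ` cells la"
  proof
    fix k assume "k \<in> {k. \<alpha> k \<noteq> 0}"
    hence "card {c \<in> cells la. T c = k} \<noteq> 0" using ssytD(4)[OF T] by simp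
    hence "{c \<in> cells la. T c = k} \<noteq> {}" by (metis card.empty)
    thus "k \<in> T ` cells la" by blast
  qed
  moreover have "finite (T ` cells la)" using finite_cells by simp
  ultimately show False using assms finite_subset by blast
qed

lemma finite_ssyt: "finite (ssyt la \<alpha>)"
proof (cases "finite {k. \<alpha> k \<noteq> 0}")
  case True
  have "ssyt la \<alpha> \<subseteq> {f. \<forall>x. (x \<in> cells la \<longrightarrow> f x \<in> {k. \<alpha> k \<noteq> 0}) \<and> (x \<notin> cells la \<longrightarrow> f x = 0)}"
    using ssyt_content_pos ssytD(1) by fastforce
  thus ?thesis using finite_set_of_finite_funs[OF finite_cells True] by (rule finite_subset)
qed (simp add: ssyt_empty_if_infinite)

lemma kostka_infinite: "infinite {k. \<alpha> k \<noteq> 0} \<Longrightarrow> kostka la \<alpha> = 0"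
  by (simp add: kostka_def ssyt_empty_if_infinite)

lemma kostka_Nil: "kostka [] \<beta> = (if \<beta> = (\<lambda>_. 0) then 1 else 0)"
proof -
  have "ssyt [] \<beta> = (if \<beta> = (\<lambda>_. 0) then {\<lambda>_. 0} else {})"
    unfolding ssyt_def cells_def by (auto simp: fun_eq_iff)
  thus ?thesis by (simp add: kostka_def)
qed

lemma kostka_zero_content:
  assumes "is_partition n la" "la \<noteq> []"
  shows "kostka la (\<lambda>_. 0) = 0"
proof -
  have "(0, 0) \<in> cells la"
    using assms row_len_pos_iff[OF assms(1), of 0] unfolding cells_row_len by simp
  hence "T \<notin> ssyt la (\<lambda>_. 0)" for T using ssyt_content_pos[of T la "\<lambda>_. 0"] by auto
  hence "ssyt la (\<lambda>_. 0) = {}" by blast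
  thus ?thesis by (simp add: kostka_def)
qed

definition strip_removals :: "nat list \<Rightarrow> nat \<Rightarrow> nat list set" where
  "strip_removals la a = {ka \<in> partitions (sum_list la - a). a \<le> sum_list la \<and> horiz_strip ka la}"

lemma finite_strip_removals: "finite (strip_removals la a)"
  unfolding strip_removals_def using finite_partitions by (rule finite_subset[rotated]) auto

lemma strip_removalsD:
  assumes "ka \<in> strip_removals la a"
  shows "is_partition (sum_list la - a) ka" "a \<le> sum_list la" "\<And>i. row_len la (Suc i) \<le> row_len ka i"
    "\<And>i. row_len ka i \<le> row_len la i" "cells ka \<subseteq> cells la" "sum_list ka + a = sum_list la"
proof -
  have h: "is_partition (sum_list la - a) ka" "a \<le> sum_list la" "interlaces (row_len ka) (row_len la)"
    using assms unfolding strip_removals_def partitions_def horiz_strip_def by auto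
  show "is_partition (sum_list la - a) ka" "a \<le> sum_list la" using h by auto
  show "\<And>i. row_len la (Suc i) \<le> row_len ka i" "\<And>i. row_len ka i \<le> row_len la i"
    using h(3) unfolding interlaces_def by auto
  thus "cells ka \<subseteq> cells la" unfolding cells_row_len by (auto intro: order.strict_trans2)
  show "sum_list ka + a = sum_list la" using h(1,2) sum_list_partition by fastforce
qed

lemma interlaces_antimono: "interlaces g f \<Longrightarrow> antimono g"
  unfolding interlaces_def antimono_iff_le_Suc by (meson order_trans)

lemma down_closed_eq_lessThan:
  assumes "finite (S::nat set)" "\<And>j j'. j \<in> S \<Longrightarrow> j' \<le> j \<Longrightarrow> j' \<in> S"
  shows "S = {..<card S}"
proof (cases "S = {}")
  case False
  have "S = {..Max S}"
  proof
    show "S \<subseteq> {..Max S}" using Max_ge[OF assms(1)] by blast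
    show "{..Max S} \<subseteq> S" using assms(2) Max_in[OF assms(1) False] by blast
  qed
  thus ?thesis by (metis card_atMost lessThan_Suc_atMost)
qed simp

lemma ssyt_lower_part_rows:
  fixes m :: nat
  assumes T: "T \<in> ssyt la \<alpha>"
  defines "g \<equiv> \<lambda>i. card {j. j < row_len la i \<and> T (i, j) < m}"
  shows "{c \<in> cells la. T c < m} = {(i, j). j < g i}"
proof -
  have "{j. j < row_len la i \<and> T (i, j) < m} = {..<g i}" for i
    unfolding g_def
  proof (rule down_closed_eq_lessThan)
    fix j j' assume "j \<in> {j. j < row_len la i \<and> T (i, j) < m}" "j' \<le> j"
    thus "j' \<in> {j. j < row_len la i \<and> T (i, j) < m}"
      using ssyt_row_mono[OF T, of i j j'] unfolding cells_row_len by auto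
  qed simp
  thus ?thesis unfolding cells_row_len by blast
qed

lemma ssyt_lower_part_interlaces:
  assumes la: "is_partition n la" and T: "T \<in> ssyt la \<alpha>" and sup: "\<forall>k>m. \<alpha> k = 0"
  shows "interlaces (\<lambda>i. card {j. j < row_len la i \<and> T (i, j) < m}) (row_len la)"
  unfolding interlaces_def
proof (intro allI conjI)
  fix i
  have fin: "finite {j. j < row_len la i \<and> T (i, j) < m}" by simp
  have "{..<row_len la (Suc i)} \<subseteq> {j. j < row_len la i \<and> T (i, j) < m}"
  proof
    fix j assume "j \<in> {..<row_len la (Suc i)}"
    hence c: "(Suc i, j) \<in> cells la" by (simp add: cells_row_len)
    have "T (i, j) < T (Suc i, j)" using ssytD(3)[OF T c] .
    moreover have "T (Suc i, j) \<le> m" using ssyt_entry_le[OF T c sup] .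
    moreover have "j < row_len la i" using cells_col_closed[OF la c, of i] by (simp add: cells_row_len)
    ultimately show "j \<in> {j. j < row_len la i \<and> T (i, j) < m}" by simp
  qed
  from card_mono[OF fin this]
  show "row_len la (Suc i) \<le> card {j. j < row_len la i \<and> T (i, j) < m}" by simp
  have "{j. j < row_len la i \<and> T (i, j) < m} \<subseteq> {..<row_len la i}" by auto
  from card_mono[OF _ this] show "card {j. j < row_len la i \<and> T (i, j) < m} \<le> row_len la i" by simp
qed

lemma ssyt_lower_part_shape:
  assumes la: "is_partition n la" and T: "T \<in> ssyt la \<alpha>" and sup: "\<forall>k>m. \<alpha> k = 0"
  obtains ka where "ka \<in> strip_removals la (\<alpha> m)" "cells ka = {c \<in> cells la. T c < m}"
proof -
  define g where "g i = card {j. j < row_len la i \<and> T (i, j) < m}" for i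
  have il: "interlaces g (row_len la)"
    unfolding g_def by (rule ssyt_lower_part_interlaces[OF la T sup])
  have gz: "\<forall>i\<ge>length la. g i = 0"
  proof (intro allI impI)
    fix i assume "length la \<le> i"
    hence "row_len la i = 0" by (simp add: row_len_def)
    thus "g i = 0" using il unfolding interlaces_def by (metis le_zero_eq)
  qed
  obtain ka where ka: "is_partition (\<Sum>i<length la. g i) ka" and row_ka: "row_len ka = g"
    using partition_with_row_len[OF interlaces_antimono[OF il] gz] .
  have lower: "cells ka = {c \<in> cells la. T c < m}"
    unfolding cells_row_len[of ka] row_ka g_def by (simp add: ssyt_lower_part_rows[OF T])
  have split: "{c \<in> cells la. T c < m} \<union> {c \<in> cells la. T c = m} = cells la"
    using ssyt_entry_le[OF T _ sup] le_neq_implies_less by blast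
  have "card ({c \<in> cells la. T c < m} \<union> {c \<in> cells la. T c = m})
      = card {c \<in> cells la. T c < m} + card {c \<in> cells la. T c = m}"
    by (rule card_Un_disjoint) (use finite_cells[of la] in auto)
  hence "card (cells la) = card {c \<in> cells la. T c < m} + card {c \<in> cells la. T c = m}"
    unfolding split .
  hence size: "sum_list ka + \<alpha> m = sum_list la"
    using ssytD(4)[OF T, of m] lower by (simp add: card_cells[symmetric])
  have "is_partition (sum_list ka) ka" using ka sum_list_partition by metis
  hence "ka \<in> strip_removals la (\<alpha> m)"
    using size il row_ka unfolding strip_removals_def partitions_def horiz_strip_def
    by (metis (no_types, lifting) add_diff_cancel_right' le_add2 mem_Collect_eq)
  thus ?thesis using that lower by blast
qed

lemma ssyt_restrict:
  assumes ka: "is_partition k ka" and T: "T \<in> ssyt la \<alpha>" and sup: "\<forall>k>m. \<alpha> k = 0"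
    and lower: "{c \<in> cells la. T c < m} = cells ka"
  shows "(\<lambda>c. if c \<in> cells ka then T c else 0) \<in> ssyt ka (\<alpha>(m := 0))"
    (is "?T' \<in> _")
proof -
  have sub: "cells ka \<subseteq> cells la" using lower by blast
  have "?T' (i, j) \<le> ?T' (i, Suc j)" if c: "(i, Suc j) \<in> cells ka" for i j
    using ssytD(2)[OF T] c cells_row_closed[OF c, of j] sub by auto
  moreover have "?T' (i, j) < ?T' (Suc i, j)" if c: "(Suc i, j) \<in> cells ka" for i j
    using ssytD(3)[OF T] c cells_col_closed[OF ka c, of i] sub by auto
  moreover have "card {c \<in> cells ka. ?T' c = k} = (\<alpha>(m := 0)) k" for k
  proof -
    have eq: "{c \<in> cells ka. ?T' c = k} = {c \<in> cells la. T c < m \<and> T c = k}"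
      using lower by auto
    show ?thesis
    proof (cases "k < m")
      case True
      hence "{c \<in> cells la. T c < m \<and> T c = k} = {c \<in> cells la. T c = k}" by auto
      thus ?thesis unfolding eq using ssytD(4)[OF T, of k] True by simp
    next
      case False
      hence "{c \<in> cells la. T c < m \<and> T c = k} = {}" by auto
      hence "card {c \<in> cells ka. ?T' c = k} = 0" unfolding eq by (simp only: card.empty)
      moreover have "(\<alpha>(m := 0)) k = 0" using False sup by auto
      ultimately show ?thesis by simp
    qed
  qed
  ultimately show ?thesis unfolding ssyt_def by auto
qed

lemma ssyt_extend:
  assumes ka: "ka \<in> strip_removals la (\<alpha> m)" and sup: "\<forall>k>m. \<alpha> k = 0"
    and T: "T \<in> ssyt ka (\<alpha>(m := 0))"
  defines "T' \<equiv> \<lambda>c. if c \<in> cells ka then T c else if c \<in> cells la then m else 0"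
  shows "T' \<in> ssyt la \<alpha>" and "{c \<in> cells la. T' c < m} = cells ka"
proof -
  note hf = strip_removalsD[OF ka]
  have lt: "T c < m" if "c \<in> cells ka" for c
    using ssyt_content_pos[OF T that] sup by (metis fun_upd_apply linorder_neqE_nat less_irrefl)
  show lower: "{c \<in> cells la. T' c < m} = cells ka"
    using lt hf(5) by (auto simp: T'_def)
  have "T' (i, j) \<le> T' (i, Suc j)" if c: "(i, Suc j) \<in> cells la" for i j
  proof (cases "(i, Suc j) \<in> cells ka")
    case True
    thus ?thesis using cells_row_closed[OF True, of j] ssytD(2)[OF T True] by (simp add: T'_def)
  next
    case False
    have "T' (i, j) \<le> m" using cells_row_closed[OF c, of j] lt[of "(i, j)"] by (auto simp: T'_def)
    thus ?thesis using False c by (simp add: T'_def)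
  qed
  moreover have "T' (i, j) < T' (Suc i, j)" if c: "(Suc i, j) \<in> cells la" for i j
  proof (cases "(Suc i, j) \<in> cells ka")
    case True
    thus ?thesis using cells_col_closed[OF hf(1) True, of i] ssytD(3)[OF T True] by (simp add: T'_def)
  next
    case False
    have "(i, j) \<in> cells ka"
      using c hf(3)[of i] unfolding cells_row_len by (auto intro: order.strict_trans2)
    thus ?thesis using c False lt[of "(i, j)"] by (simp add: T'_def)
  qed
  moreover have "card {c \<in> cells la. T' c = k} = \<alpha> k" for k
  proof (cases "k = m")
    case True
    have "{c \<in> cells la. T' c = k} = cells la - cells ka"
      using True lt hf(5) by (auto simp: T'_def)
    hence "card {c \<in> cells la. T' c = k} = card (cells la) - card (cells ka)"
      using card_Diff_subset[OF finite_subset[OF hf(5) finite_cells] hf(5)] by simp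
    thus ?thesis using hf(6) True by (simp add: card_cells)
  next
    case False
    have "{c \<in> cells la. T' c = k} = {c \<in> cells ka. T c = k}"
      using False hf(5) by (auto simp: T'_def)
    thus ?thesis using ssytD(4)[OF T, of k] False by simp
  qed
  moreover have "\<forall>c. c \<notin> cells la \<longrightarrow> T' c = 0" using hf(5) by (auto simp: T'_def)
  ultimately show "T' \<in> ssyt la \<alpha>" unfolding ssyt_def by blast
qed

lemma card_ssyt_lower_part:
  assumes la: "is_partition n la" and ka: "ka \<in> strip_removals la (\<alpha> m)" and sup: "\<forall>k>m. \<alpha> k = 0"
  shows "card {T \<in> ssyt la \<alpha>. {c \<in> cells la. T c < m} = cells ka} = kostka ka (\<alpha>(m := 0))"
proof -
  define res where "res T = (\<lambda>c. if c \<in> cells ka then T c else 0)" for T :: "nat \<times> nat \<Rightarrow> nat"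
  define ext where "ext T = (\<lambda>c. if c \<in> cells ka then T c else if c \<in> cells la then m else 0)"
    for T :: "nat \<times> nat \<Rightarrow> nat"
  note hf = strip_removalsD[OF ka]
  have "bij_betw res {T \<in> ssyt la \<alpha>. {c \<in> cells la. T c < m} = cells ka} (ssyt ka (\<alpha>(m := 0)))"
  proof (rule bij_betw_byWitness[where f' = ext])
    show "\<forall>T\<in>{T \<in> ssyt la \<alpha>. {c \<in> cells la. T c < m} = cells ka}. ext (res T) = T"
    proof (intro ballI ext)
      fix T c assume "T \<in> {T \<in> ssyt la \<alpha>. {c \<in> cells la. T c < m} = cells ka}"
      hence T: "T \<in> ssyt la \<alpha>" and lower: "{c \<in> cells la. T c < m} = cells ka" by auto
      consider "c \<in> cells ka" | "c \<notin> cells ka" "c \<in> cells la" | "c \<notin> cells la" by blast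
      thus "ext (res T) c = T c"
      proof cases
        case 2
        hence "T c = m" using ssyt_entry_le[OF T _ sup, of c] lower by fastforce
        thus ?thesis using 2 by (simp add: ext_def res_def)
      next
        case 3
        thus ?thesis using ssytD(1)[OF T] hf(5) by (auto simp: ext_def res_def)
      qed (simp add: ext_def res_def)
    qed
    show "\<forall>T\<in>ssyt ka (\<alpha>(m := 0)). res (ext T) = T"
      using ssytD(1) by (auto simp: ext_def res_def)
    show "res ` {T \<in> ssyt la \<alpha>. {c \<in> cells la. T c < m} = cells ka} \<subseteq> ssyt ka (\<alpha>(m := 0))"
      using ssyt_restrict[OF hf(1) _ sup] by (auto simp: res_def)
    show "ext ` ssyt ka (\<alpha>(m := 0)) \<subseteq> {T \<in> ssyt la \<alpha>. {c \<in> cells la. T c < m} = cells ka}"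
      using ssyt_extend[OF ka sup] by (auto simp: ext_def)
  qed
  thus ?thesis unfolding kostka_def by (rule bij_betw_same_card)
qed

lemma kostka_branching:
  assumes la: "is_partition n la" and sup: "\<forall>k>m. \<alpha> k = 0"
  shows "kostka la \<alpha> = (\<Sum>ka\<in>strip_removals la (\<alpha> m). kostka ka (\<alpha>(m := 0)))"
proof -
  define F where "F ka = {T \<in> ssyt la \<alpha>. {c \<in> cells la. T c < m} = cells ka}" for ka
  have "ssyt la \<alpha> \<subseteq> (\<Union>ka\<in>strip_removals la (\<alpha> m). F ka)"
  proof
    fix T assume T: "T \<in> ssyt la \<alpha>"
    then obtain ka where "ka \<in> strip_removals la (\<alpha> m)" "cells ka = {c \<in> cells la. T c < m}"
      using ssyt_lower_part_shape[OF la _ sup] by blast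
    thus "T \<in> (\<Union>ka\<in>strip_removals la (\<alpha> m). F ka)" using T by (auto simp: F_def)
  qed
  hence "ssyt la \<alpha> = (\<Union>ka\<in>strip_removals la (\<alpha> m). F ka)" by (auto simp: F_def)
  moreover have "\<forall>ka\<in>strip_removals la (\<alpha> m). \<forall>kb\<in>strip_removals la (\<alpha> m).
      ka \<noteq> kb \<longrightarrow> F ka \<inter> F kb = {}"
  proof (intro ballI impI)
    fix ka kb assume h: "ka \<in> strip_removals la (\<alpha> m)" "kb \<in> strip_removals la (\<alpha> m)" "ka \<noteq> kb"
    have "cells ka \<noteq> cells kb"
      using partition_eqI_cells[OF strip_removalsD(1)[OF h(1)] strip_removalsD(1)[OF h(2)]] h(3) by blast
    thus "F ka \<inter> F kb = {}" by (auto simp: F_def)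
  qed
  moreover have "\<forall>ka\<in>strip_removals la (\<alpha> m). finite (F ka)" using finite_ssyt by (simp add: F_def)
  ultimately have "kostka la \<alpha> = (\<Sum>ka\<in>strip_removals la (\<alpha> m). card (F ka))"
    unfolding kostka_def by (simp add: card_UN_disjoint[OF finite_strip_removals])
  thus ?thesis using card_ssyt_lower_part[OF la _ sup] by (simp add: F_def)
qed

section \<open>Pieri's rule for \<open>p_1\<close>\<close>

definition single :: "nat \<Rightarrow> nat \<Rightarrow> nat \<Rightarrow> nat" where
  "single j k = (\<lambda>i. if i = j then k else 0)"

text \<open>On row-length functions: \<open>addable g f r\<close> says that adding a box to row \<open>r\<close> of \<open>f\<close> gives a
  shape \<open>f'\<close> with \<open>f'/g\<close> a horizontal strip; \<open>removable g f s\<close> says that removing a box from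
  row \<open>s\<close> of \<open>g\<close> gives a shape \<open>g'\<close> with \<open>f/g'\<close> a horizontal strip.\<close>
definition addable :: "(nat \<Rightarrow> nat) \<Rightarrow> (nat \<Rightarrow> nat) \<Rightarrow> nat \<Rightarrow> bool" where
  "addable g f r \<longleftrightarrow> antimono (\<lambda>i. f i + single r 1 i) \<and> interlaces g (\<lambda>i. f i + single r 1 i)"

definition removable :: "(nat \<Rightarrow> nat) \<Rightarrow> (nat \<Rightarrow> nat) \<Rightarrow> nat \<Rightarrow> bool" where
  "removable g f s \<longleftrightarrow> 1 \<le> g s \<and> antimono (\<lambda>i. g i - single s 1 i) \<and> interlaces (\<lambda>i. g i - single s 1 i) f"

lemma addable_iff:
  "addable g f r \<longleftrightarrow> (\<forall>i. f (Suc i) + single r 1 (Suc i) \<le> f i + single r 1 i) \<and>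
      (\<forall>i. f (Suc i) + single r 1 (Suc i) \<le> g i \<and> g i \<le> f i + single r 1 i)"
  unfolding addable_def antimono_iff_le_Suc interlaces_def by simp

lemma removable_iff:
  "removable g f s \<longleftrightarrow> 1 \<le> g s \<and> (\<forall>i. g (Suc i) - single s 1 (Suc i) \<le> g i - single s 1 i) \<and>
      (\<forall>i. f (Suc i) \<le> g i - single s 1 i \<and> g i - single s 1 i \<le> f i)"
  unfolding removable_def antimono_iff_le_Suc interlaces_def by simp

lemma addable_le:
  assumes "\<forall>i\<ge>L. f i = 0" "addable g f r"
  shows "r \<le> L"
proof (cases r)
  case (Suc r')
  have "f (Suc r') + single r 1 (Suc r') \<le> f r' + single r 1 r'" using assms(2) unfolding addable_iff by blast
  hence "f r' \<noteq> 0" using Suc by (simp add: single_def)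
  hence "r' < L" using assms(1) by (meson not_le)
  thus ?thesis using Suc by simp
qed simp

lemma removable_less:
  assumes "\<forall>i\<ge>L. g i = 0" "removable g f s"
  shows "s < L"
proof (rule ccontr)
  assume "\<not> s < L"
  hence "g s = 0" using assms(1) by simp
  thus False using assms(2) unfolding removable_def by simp
qed

lemma finite_removable: "\<forall>i\<ge>L. g i = 0 \<Longrightarrow> finite {s. removable g f s}"
  using removable_less[of L g f] by (intro bounded_nat_set_is_finite) auto

lemma addable_0:
  assumes f: "antimono f" and gf: "interlaces g f"
  shows "addable g f 0"
  unfolding addable_iff
proof (intro conjI allI)
  fix i
  show "f (Suc i) + single 0 1 (Suc i) \<le> f i + single 0 1 i"
    using f[unfolded antimono_iff_le_Suc, rule_format, of i] by (simp add: single_def)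
  have "f (Suc i) \<le> g i" "g i \<le> f i" using gf by (auto simp: interlaces_def)
  thus "f (Suc i) + single 0 1 (Suc i) \<le> g i" "g i \<le> f i + single 0 1 i"
    by (auto simp: single_def)
qed

lemma addable_Suc_iff:
  assumes f: "antimono f" and gf: "interlaces g f"
  shows "addable g f (Suc s) \<longleftrightarrow> f (Suc s) < g s"
proof
  assume "addable g f (Suc s)"
  hence "f (Suc s) + single (Suc s) 1 (Suc s) \<le> g s" unfolding addable_iff by blast
  thus "f (Suc s) < g s" by (simp add: single_def)
next
  assume lt: "f (Suc s) < g s"
  have f': "f (Suc i) \<le> f i" and gf': "f (Suc i) \<le> g i" "g i \<le> f i" for i
    using f gf unfolding antimono_iff_le_Suc interlaces_def by auto
  show "addable g f (Suc s)"
    unfolding addable_iff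
  proof (intro conjI allI)
    fix i
    show "f (Suc i) + single (Suc s) 1 (Suc i) \<le> f i + single (Suc s) 1 i"
      using f'[of i] lt gf'(2)[of s] by (cases "i = s") (auto simp: single_def)
    show "f (Suc i) + single (Suc s) 1 (Suc i) \<le> g i"
      using gf'(1)[of i] lt by (cases "i = s") (auto simp: single_def)
    show "g i \<le> f i + single (Suc s) 1 i" using gf'(2)[of i] by simp
  qed
qed

lemma removable_iff_interlaced:
  assumes g: "antimono g" and gf: "interlaces g f"
  shows "removable g f s \<longleftrightarrow> f (Suc s) < g s"
proof
  assume "removable g f s"
  hence "f (Suc s) \<le> g s - single s 1 s" "1 \<le> g s" unfolding removable_iff by blast+
  thus "f (Suc s) < g s" by (simp add: single_def)
next
  assume lt: "f (Suc s) < g s"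
  have g': "g (Suc i) \<le> g i" and gf': "f (Suc i) \<le> g i" "g i \<le> f i" for i
    using g gf unfolding antimono_iff_le_Suc interlaces_def by auto
  show "removable g f s"
    unfolding removable_iff
  proof (intro conjI allI)
    show "1 \<le> g s" using lt by simp
    fix i
    show "g (Suc i) - single s 1 (Suc i) \<le> g i - single s 1 i"
      using g'[of i] lt gf'(2)[of "Suc s"] by (cases "i = s") (auto simp: single_def)
    show "f (Suc i) \<le> g i - single s 1 i" using gf'(1)[of i] lt by (cases "i = s") (auto simp: single_def)
    show "g i - single s 1 i \<le> f i" using gf'(2)[of i] by simp
  qed
qed

text \<open>If \<open>g\<close> does not interlace \<open>f\<close>, then \<open>g\<close> exceeds \<open>f\<close> in exactly one row, by one box,
  and that row is the only candidate on either side.\<close>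
lemma addable_imp_removable:
  assumes f: "antimono f" and g: "antimono g" and ngf: "\<not> interlaces g f" and r: "addable g f r"
  shows "removable g f r"
proof -
  have f': "f (Suc i) \<le> f i" and g': "g (Suc i) \<le> g i" for i
    using f g unfolding antimono_iff_le_Suc by auto
  have a: "f (Suc i) + single r 1 (Suc i) \<le> g i" "g i \<le> f i + single r 1 i" for i
    using r unfolding addable_iff by blast+
  obtain j where j: "\<not> (f (Suc j) \<le> g j \<and> g j \<le> f j)" using ngf unfolding interlaces_def by blast
  have "f j < g j" using j a(1)[of j] by simp
  hence "j = r" using a(2)[of j] by (auto simp: single_def split: if_splits)
  hence gr: "g r = f r + 1" using a(2)[of r] \<open>f j < g j\<close> by (simp add: single_def)
  show ?thesis
    unfolding removable_iff
  proof (intro conjI allI)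
    show "1 \<le> g r" using gr by simp
    fix i
    show "g (Suc i) - single r 1 (Suc i) \<le> g i - single r 1 i"
    proof (cases "i = r")
      case True
      have "g (Suc r) \<le> f (Suc r)" using a(2)[of "Suc r"] by (simp add: single_def)
      thus ?thesis using True gr f'[of r] by (simp add: single_def)
    qed (use g'[of i] in \<open>auto simp: single_def\<close>)
    show "f (Suc i) \<le> g i - single r 1 i"
      using a(1)[of i] gr f'[of r] by (cases "i = r") (auto simp: single_def)
    show "g i - single r 1 i \<le> f i" using a(2)[of i] by (cases "i = r") (auto simp: single_def)
  qed
qed

lemma removable_imp_addable:
  assumes f: "antimono f" and g: "antimono g" and ngf: "\<not> interlaces g f" and r: "removable g f r"
  shows "addable g f r"
proof -
  have f': "f (Suc i) \<le> f i" and g': "g (Suc i) \<le> g i" for i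
    using f g unfolding antimono_iff_le_Suc by auto
  have b: "f (Suc i) \<le> g i - single r 1 i" "g i - single r 1 i \<le> f i" for i
    using r unfolding removable_iff by blast+
  obtain j where j: "\<not> (f (Suc j) \<le> g j \<and> g j \<le> f j)" using ngf unfolding interlaces_def by blast
  have "f (Suc j) \<le> g j" using b(1)[of j] by simp
  hence "f j < g j" using j by simp
  hence "j = r" using b(2)[of j] by (auto simp: single_def split: if_splits)
  hence gr: "g r = f r + 1" using b(2)[of r] \<open>f j < g j\<close> r by (simp add: single_def removable_def)
  have gf: "i \<noteq> r \<Longrightarrow> g i \<le> f i" for i using b(2)[of i] by (simp add: single_def)
  show ?thesis
    unfolding addable_iff
  proof (intro conjI allI)
    fix i
    show "f (Suc i) + single r 1 (Suc i) \<le> f i + single r 1 i"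
    proof (cases "Suc i = r")
      case True
      thus ?thesis using gr g'[of i] gf[of i] by (simp add: single_def)
    qed (use f'[of i] in \<open>auto simp: single_def\<close>)
    show "f (Suc i) + single r 1 (Suc i) \<le> g i"
    proof (cases "Suc i = r")
      case True
      thus ?thesis using gr g'[of i] by (simp add: single_def)
    qed (use b(1)[of i] in \<open>auto simp: single_def\<close>)
    show "g i \<le> f i + single r 1 i" using gf[of i] gr by (cases "i = r") (auto simp: single_def)
  qed
qed

lemma card_addable:
  assumes f: "antimono f" and g: "antimono g" and gL: "\<forall>i\<ge>L. g i = 0"
  shows "card {r. addable g f r} = (if interlaces g f then 1 else 0) + card {s. removable g f s}"
proof (cases "interlaces g f")
  case True
  have "{r. addable g f r} = insert 0 (Suc ` {s. removable g f s})"
  proof (rule set_eqI)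
    fix r show "r \<in> {r. addable g f r} \<longleftrightarrow> r \<in> insert 0 (Suc ` {s. removable g f s})"
      using addable_0[OF f True] addable_Suc_iff[OF f True] removable_iff_interlaced[OF g True]
      by (cases r) auto
  qed
  moreover have "0 \<notin> Suc ` {s. removable g f s}" by auto
  ultimately show ?thesis using True finite_removable[OF gL] by (simp add: card_image)
next
  case False
  hence "{r. addable g f r} = {s. removable g f s}"
    using addable_imp_removable[OF f g False] removable_imp_addable[OF f g False] by blast
  thus ?thesis using False by simp
qed

definition upper_covers :: "nat list \<Rightarrow> nat list set" where
  "upper_covers mu = {la \<in> partitions (Suc (sum_list mu)). horiz_strip mu la}"

lemma finite_upper_covers: "finite (upper_covers mu)"
  unfolding upper_covers_def using finite_partitions by (rule finite_subset[rotated]) auto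

lemma upper_covers_partition: "la \<in> upper_covers mu \<Longrightarrow> is_partition (Suc (sum_list mu)) la"
  by (auto simp: upper_covers_def partitions_def)

lemma upper_covers_nonempty: "la \<in> upper_covers mu \<Longrightarrow> la \<noteq> []"
  by (auto simp: upper_covers_def partitions_def is_partition_def)

lemma upper_covers_subset: "mu \<in> partitions n \<Longrightarrow> upper_covers mu \<subseteq> partitions (Suc n)"
  by (auto simp: upper_covers_def partitions_def is_partition_def)

lemma horiz_strip_le: "horiz_strip ka la \<Longrightarrow> row_len ka i \<le> row_len la i"
  unfolding horiz_strip_def interlaces_def by blast

lemma upper_cover_add_box:
  assumes mu: "is_partition n mu" and la: "is_partition (Suc n) la" and h: "horiz_strip mu la"
  obtains r where "row_len la = (\<lambda>i. row_len mu i + single r 1 i)"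
proof -
  define N where "N = length mu + length la"
  have "(\<Sum>i<N. row_len la i - row_len mu i) = (\<Sum>i<N. row_len la i) - (\<Sum>i<N. row_len mu i)"
    by (rule sum_subtractf_nat) (use horiz_strip_le[OF h] in blast)
  also have "\<dots> = 1"
    using sum_list_eq_sum_row_len[of mu N] sum_list_eq_sum_row_len[of la N]
      sum_list_partition[OF mu] sum_list_partition[OF la] N_def by simp
  finally obtain r where r: "r \<in> {..<N}" "row_len la r - row_len mu r = 1"
    "\<forall>i\<in>{..<N}. r \<noteq> i \<longrightarrow> row_len la i - row_len mu i = 0"
    unfolding sum_eq_1_iff[OF finite_lessThan] by blast
  have "row_len la i = row_len mu i + single r 1 i" for i
  proof (cases "i < N")
    case True
    thus ?thesis using r horiz_strip_le[OF h, of i] by (cases "i = r") (auto simp: single_def)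
  next
    case False
    hence "row_len la i = 0" "row_len mu i = 0" "i \<noteq> r" using r(1) by (auto simp: row_len_def N_def)
    thus ?thesis by (simp add: single_def)
  qed
  thus ?thesis using that by blast
qed

lemma sum_add_single: "r < N \<Longrightarrow> (\<Sum>i<N. f i + single r 1 i) = (\<Sum>i<N. f i) + 1"
  by (simp add: sum.distrib single_def)

lemma sum_diff_single: "r < N \<Longrightarrow> 1 \<le> f r \<Longrightarrow> (\<Sum>i<N. f i - single r 1 i) = (\<Sum>i<N. f i) - 1"
proof -
  assume r: "r < N" "1 \<le> f r"
  have "(\<Sum>i<N. f i - single r 1 i) = (\<Sum>i<N. f i) - (\<Sum>i<N. single r 1 i)"
    by (rule sum_subtractf_nat) (use r in \<open>auto simp: single_def\<close>)
  thus ?thesis using r(1) by (simp add: single_def)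
qed

lemma interlaces_add_box:
  assumes "antimono f" "antimono (\<lambda>i. f i + single r 1 i)"
  shows "interlaces f (\<lambda>i. f i + single r 1 i)"
  unfolding interlaces_def
proof (intro allI conjI)
  fix i
  show "f (Suc i) + single r 1 (Suc i) \<le> f i"
  proof (cases "Suc i = r")
    case True
    thus ?thesis using assms(2)[unfolded antimono_iff_le_Suc, rule_format, of i] by (simp add: single_def)
  next
    case False
    thus ?thesis using assms(1)[unfolded antimono_iff_le_Suc, rule_format, of i] by (simp add: single_def)
  qed
qed simp

lemma interlaces_remove_box:
  assumes "antimono g" "antimono (\<lambda>i. g i - single s 1 i)"
  shows "interlaces (\<lambda>i. g i - single s 1 i) g"
  unfolding interlaces_def
proof (intro allI conjI)
  fix i
  show "g (Suc i) \<le> g i - single s 1 i"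
  proof (cases "i = s")
    case True
    thus ?thesis using assms(2)[unfolded antimono_iff_le_Suc, rule_format, of i] by (simp add: single_def)
  next
    case False
    thus ?thesis using assms(1)[unfolded antimono_iff_le_Suc, rule_format, of i] by (simp add: single_def)
  qed
qed simp

lemma addable_upper_cover:
  assumes mu: "is_partition n mu" and r: "addable (row_len ka) (row_len mu) r"
  obtains la where "la \<in> upper_covers mu" "horiz_strip ka la" "row_len la = (\<lambda>i. row_len mu i + single r 1 i)"
proof -
  define f where "f = (\<lambda>i. row_len mu i + single r 1 i)"
  define L where "L = length mu"
  have zf: "\<forall>i\<ge>L. row_len mu i = 0" by (simp add: L_def row_len_def)
  have d: "antimono f" using r by (simp add: addable_def f_def)
  have z: "\<forall>i\<ge>Suc L. f i = 0" using zf addable_le[OF zf r] by (auto simp: f_def single_def)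
  obtain la where la: "is_partition (\<Sum>i<Suc L. f i) la" "row_len la = f"
    using partition_with_row_len[OF d z] .
  have "(\<Sum>i<Suc L. f i) = Suc n"
    using sum_add_single[of r "Suc L" "row_len mu"] addable_le[OF zf r]
      sum_list_eq_sum_row_len[of mu "Suc L"] sum_list_partition[OF mu] by (simp add: L_def f_def)
  moreover have "interlaces (row_len mu) f"
    using interlaces_add_box[OF antimono_row_len[OF mu]] d by (simp add: f_def)
  ultimately have "la \<in> upper_covers mu"
    using la sum_list_partition[OF mu] by (simp add: upper_covers_def partitions_def horiz_strip_def)
  moreover have "horiz_strip ka la" using r la(2) by (simp add: horiz_strip_def addable_def f_def)
  ultimately show ?thesis using that la(2) by (simp add: f_def)
qed

lemma removable_strip_removal:
  assumes mu: "is_partition n mu" and ka: "is_partition (Suc n - a) ka"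
    and s: "removable (row_len ka) (row_len mu) s"
  obtains nu where "nu \<in> strip_removals mu a" "ka \<in> upper_covers nu"
    "row_len nu = (\<lambda>i. row_len ka i - single s 1 i)"
proof -
  define f where "f = (\<lambda>i. row_len ka i - single s 1 i)"
  define L where "L = length ka"
  have d: "antimono f" using s by (simp add: removable_def f_def)
  have sl: "s < L" using s row_len_pos_iff[OF ka, of s] by (simp add: removable_def L_def)
  have z: "\<forall>i\<ge>L. f i = 0" using sl by (auto simp: f_def single_def row_len_def L_def)
  obtain nu where nu: "is_partition (\<Sum>i<L. f i) nu" "row_len nu = f"
    using partition_with_row_len[OF d z] .
  have sum_ka: "(\<Sum>i<L. row_len ka i) = Suc n - a"
    using sum_list_eq_sum_row_len[of ka L] sum_list_partition[OF ka] L_def by simp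
  have "1 \<le> (\<Sum>i<L. row_len ka i)"
    using s member_le_sum[of s "{..<L}" "row_len ka"] sl by (simp add: removable_def)
  hence an: "a \<le> n" using sum_ka by simp
  have "(\<Sum>i<L. f i) = n - a"
    unfolding f_def using sum_diff_single[of s L "row_len ka"] sl s sum_ka an by (simp add: removable_def)
  moreover have "interlaces f (row_len ka)"
    using interlaces_remove_box[OF antimono_row_len[OF ka]] d by (simp add: f_def)
  ultimately have "nu \<in> strip_removals mu a \<and> ka \<in> upper_covers nu"
    using nu s an ka sum_list_partition[OF mu]
    by (simp add: f_def strip_removals_def upper_covers_def partitions_def horiz_strip_def
        removable_def sum_list_partition Suc_diff_le)
  thus ?thesis using that nu(2) unfolding f_def by blast
qed

lemma card_upper_covers_over:
  assumes mu: "is_partition n mu"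
  shows "card {la \<in> upper_covers mu. horiz_strip ka la} = card {r. addable (row_len ka) (row_len mu) r}"
proof -
  define f where "f r = (\<lambda>i. row_len mu i + single r 1 i)" for r
  have "row_len ` {la \<in> upper_covers mu. horiz_strip ka la} = f ` {r. addable (row_len ka) (row_len mu) r}"
  proof (intro equalityI subsetI)
    fix g assume "g \<in> row_len ` {la \<in> upper_covers mu. horiz_strip ka la}"
    then obtain la where la: "la \<in> upper_covers mu" "horiz_strip ka la" "g = row_len la" by blast
    have lap: "is_partition (Suc n) la"
      using upper_covers_partition[OF la(1)] sum_list_partition[OF mu] by simp
    have "horiz_strip mu la" using la(1) by (simp add: upper_covers_def)
    then obtain r where r: "row_len la = f r"
      using upper_cover_add_box[OF mu lap] unfolding f_def by blast
    have "addable (row_len ka) (row_len mu) r"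
      using antimono_row_len[OF lap] la(2) r by (simp add: addable_def horiz_strip_def f_def)
    thus "g \<in> f ` {r. addable (row_len ka) (row_len mu) r}" using r la(3) by blast
  next
    fix g assume "g \<in> f ` {r. addable (row_len ka) (row_len mu) r}"
    then obtain r where r: "addable (row_len ka) (row_len mu) r" and g: "g = f r" by blast
    obtain la where "la \<in> upper_covers mu" "horiz_strip ka la" "row_len la = f r"
      using addable_upper_cover[OF mu r] unfolding f_def by blast
    thus "g \<in> row_len ` {la \<in> upper_covers mu. horiz_strip ka la}"
      using g by (intro image_eqI[of _ _ la]) simp_all
  qed
  moreover have "inj_on row_len {la \<in> upper_covers mu. horiz_strip ka la}"
    using inj_on_row_len by (rule inj_on_subset) (auto simp: upper_covers_def)
  moreover have "inj_on f {r. addable (row_len ka) (row_len mu) r}"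
  proof (rule inj_onI)
    fix r r' assume "f r = f r'"
    hence "f r r = f r' r" by simp
    thus "r = r'" by (simp add: f_def single_def split: if_splits)
  qed
  ultimately show ?thesis
    using card_image[of row_len "{la \<in> upper_covers mu. horiz_strip ka la}"]
      card_image[of f "{r. addable (row_len ka) (row_len mu) r}"] by simp
qed

lemma card_strip_removals_under:
  assumes mu: "is_partition n mu" and ka: "is_partition (Suc n - a) ka"
  shows "card {nu \<in> strip_removals mu a. ka \<in> upper_covers nu} = card {s. removable (row_len ka) (row_len mu) s}"
proof -
  define f where "f s = (\<lambda>i. row_len ka i - single s 1 i)" for s
  have "row_len ` {nu \<in> strip_removals mu a. ka \<in> upper_covers nu} = f ` {s. removable (row_len ka) (row_len mu) s}"
  proof (intro equalityI subsetI)
    fix g assume "g \<in> row_len ` {nu \<in> strip_removals mu a. ka \<in> upper_covers nu}"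
    then obtain nu where nu: "nu \<in> strip_removals mu a" "ka \<in> upper_covers nu" "g = row_len nu" by blast
    note nup = strip_removalsD(1)[OF nu(1)]
    have "is_partition (Suc (sum_list nu)) ka" "horiz_strip nu ka"
      using nu(2) by (auto simp: upper_covers_def partitions_def)
    then obtain s where s: "row_len ka = (\<lambda>i. row_len nu i + single s 1 i)"
      using upper_cover_add_box[OF nup] sum_list_partition[OF nup] by metis
    have f_s: "row_len nu = f s" using s by (auto simp: f_def)
    have "removable (row_len ka) (row_len mu) s"
      using fun_cong[OF s, of s] antimono_row_len[OF nup] nu(1) f_s
      by (simp add: removable_def strip_removals_def horiz_strip_def single_def f_def)
    thus "g \<in> f ` {s. removable (row_len ka) (row_len mu) s}" using f_s nu(3) by blast
  next
    fix g assume "g \<in> f ` {s. removable (row_len ka) (row_len mu) s}"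
    then obtain s where s: "removable (row_len ka) (row_len mu) s" and g: "g = f s" by blast
    obtain nu where "nu \<in> strip_removals mu a" "ka \<in> upper_covers nu" "row_len nu = f s"
      using removable_strip_removal[OF mu ka s] unfolding f_def by blast
    thus "g \<in> row_len ` {nu \<in> strip_removals mu a. ka \<in> upper_covers nu}"
      using g by (intro image_eqI[of _ _ nu]) simp_all
  qed
  moreover have "inj_on row_len {nu \<in> strip_removals mu a. ka \<in> upper_covers nu}"
    using inj_on_row_len by (rule inj_on_subset) (auto simp: strip_removals_def)
  moreover have "inj_on f {s. removable (row_len ka) (row_len mu) s}"
  proof (rule inj_onI)
    fix s s' assume "s \<in> {s. removable (row_len ka) (row_len mu) s}" "f s = f s'"
    hence "f s s = f s' s" "1 \<le> row_len ka s" by (simp_all add: removable_def)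
    thus "s = s'" by (simp add: f_def single_def split: if_splits)
  qed
  ultimately show ?thesis
    using card_image[of row_len "{nu \<in> strip_removals mu a. ka \<in> upper_covers nu}"]
      card_image[of f "{s. removable (row_len ka) (row_len mu) s}"] by simp
qed

lemma interlaces_sum_le: "interlaces g f \<Longrightarrow> (\<Sum>i<L. g i) \<le> (\<Sum>i<L. f i)"
  unfolding interlaces_def by (intro sum_mono) blast

text \<open>Adding a box and removing a horizontal strip of size \<open>a\<close> almost commute: the two orders
  of operations lead from \<open>mu\<close> to \<open>ka\<close> equally often, except that \<open>mu/ka\<close> itself may be a
  strip of size \<open>a - 1\<close>.\<close>
lemma card_cover_strip_exchange:
  assumes mu: "is_partition n mu" and ka: "is_partition (Suc n - a) ka" and a: "a \<le> Suc n"
  shows "card {la \<in> upper_covers mu. ka \<in> strip_removals la a} =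
    (if 1 \<le> a \<and> ka \<in> strip_removals mu (a - 1) then 1 else 0)
    + card {nu \<in> strip_removals mu a. ka \<in> upper_covers nu}"
proof -
  define L where "L = length mu + length ka"
  have zg: "\<forall>i\<ge>L. row_len ka i = 0" by (auto simp: L_def row_len_def)
  have "{la \<in> upper_covers mu. ka \<in> strip_removals la a} = {la \<in> upper_covers mu. horiz_strip ka la}"
  proof (intro Collect_cong conj_cong refl)
    fix la assume "la \<in> upper_covers mu"
    hence "sum_list la = Suc n"
      using sum_list_partition[OF upper_covers_partition] sum_list_partition[OF mu] by metis
    thus "ka \<in> strip_removals la a \<longleftrightarrow> horiz_strip ka la"
      using ka a by (simp add: strip_removals_def partitions_def)
  qed
  moreover have "(1 \<le> a \<and> ka \<in> strip_removals mu (a - 1)) = interlaces (row_len ka) (row_len mu)"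
  proof
    assume "1 \<le> a \<and> ka \<in> strip_removals mu (a - 1)"
    thus "interlaces (row_len ka) (row_len mu)" by (simp add: strip_removals_def horiz_strip_def)
  next
    assume h: "interlaces (row_len ka) (row_len mu)"
    have "Suc n - a \<le> n"
      using interlaces_sum_le[OF h, of L] sum_list_eq_sum_row_len[of ka L] sum_list_eq_sum_row_len[of mu L]
        sum_list_partition[OF ka] sum_list_partition[OF mu] L_def by simp
    hence "1 \<le> a" "n - (a - 1) = Suc n - a" "a - 1 \<le> n" using a by arith+
    thus "1 \<le> a \<and> ka \<in> strip_removals mu (a - 1)" using h ka sum_list_partition[OF mu]
      by (simp add: strip_removals_def horiz_strip_def partitions_def)
  qed
  ultimately show ?thesis
    using card_addable[OF antimono_row_len[OF mu] antimono_row_len[OF ka] zg]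
    by (simp add: card_upper_covers_over[OF mu] card_strip_removals_under[OF mu ka])
qed

lemma sum_swap_count:
  assumes "finite A" "finite B" "\<forall>x\<in>A. C x \<subseteq> B"
  shows "(\<Sum>x\<in>A. \<Sum>y\<in>C x. h y) = (\<Sum>y\<in>B. card {x\<in>A. y \<in> C x} * (h y :: nat))"
proof -
  have "(\<Sum>x\<in>A. \<Sum>y\<in>C x. h y) = (\<Sum>x\<in>A. \<Sum>y\<in>{y. y \<in> B \<and> y \<in> C x}. h y)"
    using assms(3) by (intro sum.cong) (auto intro: arg_cong2[where f = sum])
  also have "\<dots> = (\<Sum>y\<in>B. \<Sum>x\<in>{x. x \<in> A \<and> y \<in> C x}. h y)"
    by (rule sum.swap_restrict[OF assms(1,2)])
  finally show ?thesis by simp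
qed

lemma sum_cover_strip_exchange:
  assumes mu: "is_partition n mu"
  shows "(\<Sum>la\<in>upper_covers mu. \<Sum>ka\<in>strip_removals la a. h ka) =
    (if 1 \<le> a then (\<Sum>nu\<in>strip_removals mu (a - 1). h nu) else 0)
    + (\<Sum>nu\<in>strip_removals mu a. \<Sum>ka\<in>upper_covers nu. (h ka :: nat))"
proof (cases "a \<le> Suc n")
  case False
  hence "strip_removals la a = {}" if "la \<in> upper_covers mu" for la
    using that sum_list_partition[OF upper_covers_partition[OF that]] sum_list_partition[OF mu]
    by (auto simp: strip_removals_def)
  moreover have "strip_removals mu (a - 1) = {}" "strip_removals mu a = {}"
    using False sum_list_partition[OF mu] by (auto simp: strip_removals_def)
  ultimately show ?thesis by simp
next
  case True
  define B where "B = partitions (Suc n - a)"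
  have fB: "finite B" using finite_partitions B_def by simp
  have "strip_removals la a \<subseteq> B" if "la \<in> upper_covers mu" for la
    using sum_list_partition[OF upper_covers_partition[OF that]] sum_list_partition[OF mu]
    by (auto simp: strip_removals_def B_def)
  hence lhs: "(\<Sum>la\<in>upper_covers mu. \<Sum>ka\<in>strip_removals la a. h ka)
      = (\<Sum>ka\<in>B. card {la\<in>upper_covers mu. ka \<in> strip_removals la a} * h ka)"
    by (intro sum_swap_count[OF finite_upper_covers fB]) blast
  have "upper_covers nu \<subseteq> B" if "nu \<in> strip_removals mu a" for nu
    using strip_removalsD(1,2)[OF that] sum_list_partition[OF mu]
    by (auto simp: upper_covers_def B_def sum_list_partition Suc_diff_le)
  hence rhs2: "(\<Sum>nu\<in>strip_removals mu a. \<Sum>ka\<in>upper_covers nu. h ka)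
      = (\<Sum>ka\<in>B. card {nu\<in>strip_removals mu a. ka \<in> upper_covers nu} * h ka)"
    by (intro sum_swap_count[OF finite_strip_removals fB]) blast
  have rhs1: "(if 1 \<le> a then (\<Sum>nu\<in>strip_removals mu (a - 1). h nu) else 0)
      = (\<Sum>ka\<in>B. if 1 \<le> a \<and> ka \<in> strip_removals mu (a - 1) then h ka else 0)"
  proof (cases "1 \<le> a")
    case True
    have "strip_removals mu (a - 1) = B \<inter> strip_removals mu (a - 1)"
      using True sum_list_partition[OF mu] by (auto simp: strip_removals_def B_def)
    thus ?thesis using True sum.inter_restrict[OF fB, of h "strip_removals mu (a - 1)"] by simp
  qed simp
  have "card {la\<in>upper_covers mu. ka \<in> strip_removals la a} * h ka =
      (if 1 \<le> a \<and> ka \<in> strip_removals mu (a - 1) then h ka else 0)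
      + card {nu\<in>strip_removals mu a. ka \<in> upper_covers nu} * h ka" if "ka \<in> B" for ka
    using card_cover_strip_exchange[OF mu _ True, of ka] that
    by (simp add: B_def partitions_def algebra_simps)
  thus ?thesis unfolding lhs rhs1 rhs2 sum.distrib[symmetric] by (rule sum.cong[OF refl])
qed

lemma kostka_branching_decr:
  assumes mu: "is_partition n mu" and sup: "\<forall>k>m. \<alpha> k = 0" and j: "j \<le> m"
  shows "kostka mu (\<alpha>(j := \<alpha> j - 1)) =
    (\<Sum>nu\<in>strip_removals mu ((\<alpha>(j := \<alpha> j - 1)) m). kostka nu ((\<alpha>(m := 0))(j := (\<alpha>(m := 0)) j - 1)))"
proof -
  have "(\<alpha>(j := \<alpha> j - 1))(m := 0) = (\<alpha>(m := 0))(j := (\<alpha>(m := 0)) j - 1)"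
    by (cases "j = m") (auto simp: fun_upd_twist)
  moreover have "\<forall>k>m. (\<alpha>(j := \<alpha> j - 1)) k = 0" using sup j by auto
  ultimately show ?thesis using kostka_branching[OF mu] by metis
qed

text \<open>Pieri's rule for \<open>p_1 s_mu\<close>, read off at the monomial \<open>x^\<alpha>\<close>; induction on the number of
  variables, peeling off the last one with the branching rule.\<close>
lemma pieri_kostka:
  assumes "\<forall>k\<ge>m. \<alpha> k = 0" "is_partition n mu"
  shows "(\<Sum>j<m. if 1 \<le> \<alpha> j then kostka mu (\<alpha>(j := \<alpha> j - 1)) else 0) = (\<Sum>la\<in>upper_covers mu. kostka la \<alpha>)"
  using assms
proof (induction m arbitrary: \<alpha> mu n)
  case 0
  hence "\<alpha> = (\<lambda>_. 0)" by auto
  thus ?case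
    using kostka_zero_content[OF upper_covers_partition upper_covers_nonempty] by simp
next
  case (Suc m)
  note mu = Suc.prems(2)
  define a where "a = \<alpha> m"
  define \<alpha>' where "\<alpha>' = \<alpha>(m := 0)"
  have sup: "\<forall>k>m. \<alpha> k = 0" using Suc.prems(1) by auto
  have sup': "\<forall>k\<ge>m. \<alpha>' k = 0" using sup by (auto simp: \<alpha>'_def)
  have "(\<Sum>j<m. if 1 \<le> \<alpha> j then kostka mu (\<alpha>(j := \<alpha> j - 1)) else 0) =
      (\<Sum>j<m. \<Sum>nu\<in>strip_removals mu a. if 1 \<le> \<alpha>' j then kostka nu (\<alpha>'(j := \<alpha>' j - 1)) else 0)"
    using kostka_branching_decr[OF mu sup] by (intro sum.cong) (auto simp: a_def \<alpha>'_def)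
  also have "\<dots> = (\<Sum>nu\<in>strip_removals mu a. \<Sum>j<m. if 1 \<le> \<alpha>' j then kostka nu (\<alpha>'(j := \<alpha>' j - 1)) else 0)"
    by (rule sum.swap)
  also have "\<dots> = (\<Sum>nu\<in>strip_removals mu a. \<Sum>ka\<in>upper_covers nu. kostka ka \<alpha>')"
    using Suc.IH[OF sup' strip_removalsD(1)] by (intro sum.cong) auto
  finally have A: "(\<Sum>j<m. if 1 \<le> \<alpha> j then kostka mu (\<alpha>(j := \<alpha> j - 1)) else 0) =
      (\<Sum>nu\<in>strip_removals mu a. \<Sum>ka\<in>upper_covers nu. kostka ka \<alpha>')" .
  have B: "(if 1 \<le> \<alpha> m then kostka mu (\<alpha>(m := \<alpha> m - 1)) else 0) =
      (if 1 \<le> a then (\<Sum>nu\<in>strip_removals mu (a - 1). kostka nu \<alpha>') else 0)"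
    using kostka_branching_decr[OF mu sup order_refl] by (simp add: a_def \<alpha>'_def)
  have C: "(\<Sum>la\<in>upper_covers mu. kostka la \<alpha>) = (\<Sum>la\<in>upper_covers mu. \<Sum>ka\<in>strip_removals la a. kostka ka \<alpha>')"
    using kostka_branching[OF upper_covers_partition sup] by (simp add: a_def \<alpha>'_def)
  show ?case
    unfolding sum.lessThan_Suc A B C sum_cover_strip_exchange[OF mu] by simp
qed
section \<open>Hooks and the Murnaghan--Nakayama rule for \<open>p_n\<close>\<close>

lemma row_len_hook: "row_len (hook n i) k = (if k = 0 then n - i else if k \<le> i then 1 else 0)"
  by (cases k) (auto simp: row_len_def hook_def nth_Cons')

lemma is_partition_hook: "i < n \<Longrightarrow> is_partition n (hook n i)"
proof -
  assume "i < n"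
  have "sorted_wrt (\<ge>) (replicate i (1::nat))" by (simp add: sorted_wrt_iff_nth_less)
  thus ?thesis unfolding is_partition_def hook_def using \<open>i < n\<close> by (auto simp: sum_list_replicate)
qed

lemma hook_partitions: "i < n \<Longrightarrow> hook n i \<in> partitions n"
  by (simp add: partitions_def is_partition_hook)

lemma hook_eq_iff [simp]: "hook n i = hook n j \<longleftrightarrow> i = j"
  by (metis hook_def length_Cons length_replicate nat.inject)

lemma hook_ne_Nil [simp]: "hook n i \<noteq> []"
  by (simp add: hook_def)

lemma row_len_Nil [simp]: "row_len [] k = 0"
  by (simp add: row_len_def)

lemma replicate_one_eq_hook: "1 \<le> n \<Longrightarrow> replicate n 1 = hook n (n - 1)"
  by (cases n) (simp_all add: hook_def)

lemma partition_eq_hook: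
  assumes la: "is_partition n la" and ne: "la \<noteq> []" and rows: "\<forall>k. row_len la (Suc k) \<le> 1"
  shows "la = hook n (length la - 1)" "length la - 1 < n"
proof -
  define L where "L = length la"
  have tail: "row_len la (Suc k) = (if Suc k \<le> L - 1 then 1 else 0)" for k
    using rows[rule_format, of k] row_len_pos_iff[OF la, of "Suc k"] L_def by auto
  have "n = (\<Sum>k<Suc (L - 1). row_len la k)"
    using sum_list_eq_sum_row_len[of la "Suc (L - 1)"] sum_list_partition[OF la] L_def by simp
  also have "\<dots> = row_len la 0 + (L - 1)"
    unfolding sum.lessThan_Suc_shift tail by (simp add: sum.If_cases Int_def)
  finally have n: "n = row_len la 0 + (L - 1)" .
  moreover have "0 < row_len la 0" using row_len_pos_iff[OF la, of 0] ne by simp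
  ultimately show less: "length la - 1 < n" unfolding L_def by simp
  have "row_len la k = row_len (hook n (L - 1)) k" for k
    using n tail by (cases k) (auto simp: row_len_hook)
  thus "la = hook n (length la - 1)"
    using partition_eqI[OF la is_partition_hook[OF less]] L_def by blast
qed

lemma non_hook_second_row:
  assumes la: "is_partition n la" and ne: "la \<noteq> []" and nh: "\<forall>i<n. la \<noteq> hook n i"
  shows "2 \<le> row_len la 1"
proof (rule ccontr)
  assume "\<not> 2 \<le> row_len la 1"
  hence "row_len la (Suc k) \<le> 1" for k
    using antimonoD[OF antimono_row_len[OF la], of 1 "Suc k"] by simp
  thus False using partition_eq_hook[OF la ne] nh by blast
qed

lemma strip_removals_hook_cases:
  assumes i: "i < n" and ka: "ka \<in> strip_removals (hook n i) a"
  shows "(ka = [] \<and> a = n \<and> i = 0) \<or> (ka = hook (n - a) i \<and> i < n - a)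
    \<or> (1 \<le> i \<and> ka = hook (n - a) (i - 1) \<and> i - 1 < n - a)"
proof -
  have sh: "sum_list (hook n i) = n" using i by (simp add: hook_def sum_list_replicate)
  note hf = strip_removalsD[OF ka, unfolded sh]
  show ?thesis
  proof (cases "ka = []")
    case True
    have "i = 0" using hf(3)[of 0] True by (simp add: row_len_hook split: if_splits)
    thus ?thesis using True hf(6) by simp
  next
    case False
    define L where "L = length ka"
    have "\<forall>k. row_len ka (Suc k) \<le> 1"
    proof
      fix k show "row_len ka (Suc k) \<le> 1" using hf(4)[of "Suc k"] by (simp add: row_len_hook split: if_splits)
    qed
    note hk = partition_eq_hook[OF hf(1) False this, folded L_def]
    have "\<not> Suc i < L" using hf(4)[of "Suc i"] row_len_pos_iff[OF hf(1), of "Suc i"] L_def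
      by (simp add: row_len_hook)
    moreover have "i - 1 < L" if "1 \<le> i"
      using that hf(3)[of "i - 1"] row_len_pos_iff[OF hf(1), of "i - 1"] L_def by (simp add: row_len_hook)
    ultimately have "L - 1 = i \<or> (1 \<le> i \<and> L - 1 = i - 1)" using False L_def by (cases "1 \<le> i") auto
    thus ?thesis using hk by auto
  qed
qed

lemma strip_removals_hook:
  assumes i: "i < n" and a: "1 \<le> a"
  shows "strip_removals (hook n i) a = (if i < n - a then {hook (n - a) i} else {})
      \<union> (if 1 \<le> i \<and> i - 1 < n - a then {hook (n - a) (i - 1)} else {})
      \<union> (if a = n \<and> i = 0 then {[]} else {})"
proof -
  have sh: "sum_list (hook n i) = n" using i by (simp add: hook_def sum_list_replicate)
  have "hook (n - a) i \<in> strip_removals (hook n i) a" if "i < n - a"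
    using that is_partition_hook[OF that] sh
    by (auto simp: strip_removals_def partitions_def horiz_strip_def interlaces_def row_len_hook)
  moreover have "hook (n - a) (i - 1) \<in> strip_removals (hook n i) a" if "1 \<le> i" "i - 1 < n - a"
    using that is_partition_hook[OF that(2)] sh a
    by (auto simp: strip_removals_def partitions_def horiz_strip_def interlaces_def row_len_hook)
  moreover have "[] \<in> strip_removals (hook n i) a" if "a = n" "i = 0"
    using that sh
    by (auto simp: strip_removals_def partitions_def horiz_strip_def interlaces_def row_len_hook
        is_partition_def)
  ultimately show ?thesis
  proof (intro set_eqI iffI)
    fix ka assume "ka \<in> strip_removals (hook n i) a"
    from strip_removals_hook_cases[OF i this] a
    show "ka \<in> (if i < n - a then {hook (n - a) i} else {})
      \<union> (if 1 \<le> i \<and> i - 1 < n - a then {hook (n - a) (i - 1)} else {})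
      \<union> (if a = n \<and> i = 0 then {[]} else {})" by auto
  qed (auto split: if_splits)
qed

lemma sum_strip_removals_hook:
  assumes i: "i < n" and a: "1 \<le> a"
  shows "(\<Sum>ka\<in>strip_removals (hook n i) a. h ka) =
    (if i < n - a then h (hook (n - a) i) else 0) + (if 1 \<le> i \<and> i - 1 < n - a then h (hook (n - a) (i - 1)) else 0)
    + (if a = n \<and> i = 0 then h [] else 0)"
  unfolding strip_removals_hook[OF i a] by (cases "1 \<le> i") (auto simp: sum.union_disjoint add.commute)

lemma sum_lessThan_if_less:
  fixes f :: "nat \<Rightarrow> 'a::comm_monoid_add"
  shows "b \<le> n \<Longrightarrow> (\<Sum>i<n. if i < b then f i else 0) = (\<Sum>i<b. f i)"
  by (induction n) (auto simp: less_Suc_eq_le le_Suc_eq)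

lemma alternating_sum_hook_pairs:
  fixes X :: "nat \<Rightarrow> int"
  assumes "b < n"
  shows "(\<Sum>i<n. (-1)^i * ((if i < b then X i else 0) + (if 1 \<le> i \<and> i - 1 < b then X (i - 1) else 0))) = 0"
proof -
  obtain n' where n: "n = Suc n'" and b: "b \<le> n'" using assms by (cases n) auto
  have push: "(-1)^i * (if P then x else 0) = (if P then (-1)^i * x else (0::int))" for i P x by simp
  have "(\<Sum>i<n. (-1)^i * (if i < b then X i else 0)) = (\<Sum>i<b. (-1)^i * X i)"
    unfolding push using sum_lessThan_if_less[of b n "\<lambda>i. (-1)^i * X i"] assms by simp
  moreover have "(\<Sum>i<n. (-1)^i * (if 1 \<le> i \<and> i - 1 < b then X (i - 1) else 0)) = - (\<Sum>i<b. (-1)^i * X i)"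
    unfolding n sum.lessThan_Suc_shift push
    using sum_lessThan_if_less[of b n' "\<lambda>i. (-1)^Suc i * X i"] b
    by (simp add: sum_negf[symmetric] cong: if_cong)
  ultimately show ?thesis by (simp add: distrib_left sum.distrib)
qed

lemma power_sum_infinite: "infinite {k. \<alpha> k \<noteq> 0} \<Longrightarrow> power_sum n \<alpha> = 0"
proof -
  assume inf: "infinite {k. \<alpha> k \<noteq> 0}"
  have "\<alpha> \<noteq> (\<lambda>i. if i = j then n else 0)" for j
  proof
    assume "\<alpha> = (\<lambda>i. if i = j then n else 0)"
    hence "{k. \<alpha> k \<noteq> 0} \<subseteq> {j}" by auto
    thus False using inf finite_subset by blast
  qed
  thus ?thesis by (simp add: power_sum_def)
qed

lemma power_sum_top:
  assumes sup: "\<forall>k>m. \<alpha> k = 0" and top: "\<alpha> m \<noteq> 0"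
  shows "power_sum n \<alpha> = (if \<alpha>(m := 0) = (\<lambda>_. 0) \<and> \<alpha> m = n then 1 else 0)"
proof -
  have "(\<exists>j. \<alpha> = (\<lambda>i. if i = j then n else 0)) \<longleftrightarrow> \<alpha>(m := 0) = (\<lambda>_. 0) \<and> \<alpha> m = n"
  proof
    assume "\<exists>j. \<alpha> = (\<lambda>i. if i = j then n else 0)"
    then obtain j where j: "\<alpha> = (\<lambda>i. if i = j then n else 0)" by blast
    hence "m = j" using top by (auto split: if_splits)
    thus "\<alpha>(m := 0) = (\<lambda>_. 0) \<and> \<alpha> m = n" using j by (auto simp: fun_eq_iff)
  next
    assume "\<alpha>(m := 0) = (\<lambda>_. 0) \<and> \<alpha> m = n"
    hence "\<alpha> = (\<lambda>i. if i = m then n else 0)" by (auto simp: fun_eq_iff split: if_splits)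
    thus "\<exists>j. \<alpha> = (\<lambda>i. if i = j then n else 0)" by blast
  qed
  thus ?thesis by (simp add: power_sum_def)
qed

text \<open>Branching on the largest letter \<open>m\<close> (with multiplicity \<open>a\<close>) turns each hook
  into at most two smaller hooks, and the resulting alternating sum telescopes, except for the
  empty shape, which survives only if \<open>x^\<alpha> = x_m^n\<close>.\<close>
lemma power_sum_hook_expansion:
  assumes n: "1 \<le> n"
  shows "power_sum n \<alpha> = (\<Sum>i<n. (-1)^i * int (kostka (hook n i) \<alpha>))"
proof (cases "finite {k. \<alpha> k \<noteq> 0}")
  case False
  thus ?thesis using kostka_infinite power_sum_infinite by simp
next
  case fin: True
  show ?thesis
  proof (cases "\<alpha> = (\<lambda>_. 0)")
    case True
    have "(\<lambda>_. 0) \<noteq> (\<lambda>i. if i = j then n else (0::nat))" for j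
      using n fun_cong[of "\<lambda>_. 0::nat" _ j] by fastforce
    thus ?thesis using True kostka_zero_content[OF is_partition_hook hook_ne_Nil]
      by (simp add: power_sum_def) blast
  next
    case False
    define m where "m = Max {k. \<alpha> k \<noteq> 0}"
    define a where "a = \<alpha> m"
    define \<alpha>' where "\<alpha>' = \<alpha>(m := 0)"
    have "{k. \<alpha> k \<noteq> 0} \<noteq> {}" using False by auto
    hence a1: "1 \<le> a" using Max_in[OF fin] by (simp add: m_def a_def)
    have sup: "\<forall>k>m. \<alpha> k = 0" using Max_ge[OF fin] by (fastforce simp: m_def)
    have "int (kostka (hook n i) \<alpha>) =
      (if i < n - a then int (kostka (hook (n - a) i) \<alpha>') else 0)
      + (if 1 \<le> i \<and> i - 1 < n - a then int (kostka (hook (n - a) (i - 1)) \<alpha>') else 0)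
      + (if a = n \<and> i = 0 then int (kostka [] \<alpha>') else 0)" if i: "i < n" for i
      using kostka_branching[OF is_partition_hook[OF i] sup] sum_strip_removals_hook[OF i a1, of "\<lambda>ka. kostka ka \<alpha>'"]
      unfolding a_def[symmetric] \<alpha>'_def[symmetric] by simp
    hence "(\<Sum>i<n. (-1)^i * int (kostka (hook n i) \<alpha>)) =
       (\<Sum>i<n. (-1)^i * ((if i < n - a then int (kostka (hook (n - a) i) \<alpha>') else 0)
         + (if 1 \<le> i \<and> i - 1 < n - a then int (kostka (hook (n - a) (i - 1)) \<alpha>') else 0)))
       + (\<Sum>i<n. (-1)^i * (if a = n \<and> i = 0 then int (kostka [] \<alpha>') else 0))"
      by (simp add: distrib_left sum.distrib[symmetric])
    also have "(\<Sum>i<n. (-1)^i * ((if i < n - a then int (kostka (hook (n - a) i) \<alpha>') else 0)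
         + (if 1 \<le> i \<and> i - 1 < n - a then int (kostka (hook (n - a) (i - 1)) \<alpha>') else 0))) = 0"
      using alternating_sum_hook_pairs[of "n - a" n "\<lambda>j. int (kostka (hook (n - a) j) \<alpha>')"] a1
      by (cases "a < n") simp_all
    also have "(\<Sum>i<n. (-1)^i * (if a = n \<and> i = 0 then int (kostka [] \<alpha>') else 0)) =
        (if a = n then int (kostka [] \<alpha>') else 0)"
      using n by (simp add: if_distrib[of "times _"] sum.delta cong: if_cong)
    finally show ?thesis
      using power_sum_top[OF sup] a1 by (simp add: kostka_Nil a_def \<alpha>'_def)
  qed
qed
section \<open>Multiplication by power sums\<close>

lemma mult_ser_infinite:
  assumes "infinite {k. \<alpha> k \<noteq> 0}"
  shows "mult_ser f g \<alpha> = 0"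
proof -
  have "inj_on (\<lambda>j. single j 1) {k. \<alpha> k \<noteq> 0}"
  proof (rule inj_onI)
    fix x y assume "single x 1 = single y 1"
    hence "single x 1 x = single y 1 x" by simp
    thus "x = y" by (simp add: single_def split: if_splits)
  qed
  hence "infinite ((\<lambda>j. single j 1) ` {k. \<alpha> k \<noteq> 0})" using assms finite_imageD by blast
  moreover have "(\<lambda>j. single j 1) ` {k. \<alpha> k \<noteq> 0} \<subseteq> {\<beta>. \<forall>i. \<beta> i \<le> \<alpha> i}" by (auto simp: single_def)
  ultimately have "infinite {\<beta>. \<forall>i. \<beta> i \<le> \<alpha> i}" using finite_subset by blast
  thus ?thesis by (simp add: mult_ser_def)
qed

lemma finite_pointwise_le:
  fixes \<alpha> :: "nat \<Rightarrow> nat"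
  assumes "\<forall>k\<ge>m. \<alpha> k = 0"
  shows "finite {\<beta>. \<forall>i. \<beta> i \<le> \<alpha> i}"
proof -
  define M where "M = (\<Sum>i<m. \<alpha> i)"
  have "{\<beta>. \<forall>i. \<beta> i \<le> \<alpha> i} \<subseteq> {f. \<forall>x. (x \<in> {..<m} \<longrightarrow> f x \<in> {..M}) \<and> (x \<notin> {..<m} \<longrightarrow> f x = 0)}"
  proof (rule subsetI)
    fix \<beta> assume "\<beta> \<in> {\<beta>. \<forall>i. \<beta> i \<le> \<alpha> i}"
    hence b: "\<beta> i \<le> \<alpha> i" for i by simp
    have "\<beta> x \<le> M" if "x < m" for x
    proof -
      have "\<alpha> x \<le> M" unfolding M_def by (rule member_le_sum) (use that in auto)
      thus ?thesis using b[of x] by linarith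
    qed
    moreover have "\<beta> x = 0" if "\<not> x < m" for x using b[of x] assms that by simp
    ultimately show "\<beta> \<in> {f. \<forall>x. (x \<in> {..<m} \<longrightarrow> f x \<in> {..M}) \<and> (x \<notin> {..<m} \<longrightarrow> f x = 0)}" by auto
  qed
  thus ?thesis using finite_set_of_finite_funs[of "{..<m}" "{..M}" 0] finite_subset by blast
qed

lemma finite_support_bound: "finite {k::nat. \<alpha> k \<noteq> (0::nat)} \<Longrightarrow> \<exists>m. \<forall>k\<ge>m. \<alpha> k = 0"
proof -
  assume "finite {k. \<alpha> k \<noteq> 0}"
  then obtain m where "\<forall>k\<in>{k. \<alpha> k \<noteq> 0}. k < m" using finite_nat_set_iff_bounded by blast
  hence "\<forall>k\<ge>m. \<alpha> k = 0" by force
  thus ?thesis by blast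
qed

lemma single_eq_iff: "1 \<le> k \<Longrightarrow> single j k = single j' k \<longleftrightarrow> j = j'"
  by (auto simp: single_def fun_eq_iff)

lemma power_sum_le_bounded:
  assumes k: "1 \<le> k" and sup: "\<forall>i\<ge>m. \<alpha> i = 0" and le: "\<forall>i. \<beta> i \<le> \<alpha> i"
  shows "power_sum k \<beta> = (\<Sum>j<m. if \<beta> = single j k then 1 else 0)"
proof (cases "\<exists>j. \<beta> = single j k")
  case True
  then obtain j where j: "\<beta> = single j k" by blast
  have "j < m"
  proof (rule ccontr)
    assume "\<not> j < m"
    thus False using le[rule_format, of j] sup k j by (simp add: single_def)
  qed
  moreover have "power_sum k \<beta> = 1" using j by (auto simp: power_sum_def single_def)
  ultimately show ?thesis using j k by (simp add: single_eq_iff)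
next
  case False
  thus ?thesis by (auto simp: power_sum_def single_def)
qed

lemma mult_ser_power_sum:
  assumes k: "1 \<le> k" and sup: "\<forall>i\<ge>m. \<alpha> i = 0"
  shows "mult_ser (power_sum k) f \<alpha> = (\<Sum>j<m. if k \<le> \<alpha> j then f (\<alpha>(j := \<alpha> j - k)) else 0)"
proof -
  define B where "B = {\<beta>. \<forall>i. \<beta> i \<le> \<alpha> i}"
  have fB: "finite B" using finite_pointwise_le[OF sup] B_def by simp
  have ps: "power_sum k \<beta> = (\<Sum>j<m. if \<beta> = single j k then 1 else 0)" if "\<beta> \<in> B" for \<beta>
    using power_sum_le_bounded[OF k sup] that by (simp add: B_def)
  have "mult_ser (power_sum k) f \<alpha> = (\<Sum>\<beta>\<in>B. power_sum k \<beta> * f (\<lambda>i. \<alpha> i - \<beta> i))"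
    by (simp add: mult_ser_def B_def)
  also have "\<dots> = (\<Sum>\<beta>\<in>B. \<Sum>j<m. if \<beta> = single j k then f (\<lambda>i. \<alpha> i - \<beta> i) else 0)"
    by (rule sum.cong[OF refl]) (auto simp: ps sum_distrib_right intro!: sum.cong)
  also have "\<dots> = (\<Sum>j<m. \<Sum>\<beta>\<in>B. if \<beta> = single j k then f (\<lambda>i. \<alpha> i - \<beta> i) else 0)" by (rule sum.swap)
  also have "\<dots> = (\<Sum>j<m. if k \<le> \<alpha> j then f (\<alpha>(j := \<alpha> j - k)) else 0)"
  proof (rule sum.cong[OF refl])
    fix j
    have "(\<Sum>\<beta>\<in>B. if \<beta> = single j k then f (\<lambda>i. \<alpha> i - \<beta> i) else 0) =
        (if single j k \<in> B then f (\<lambda>i. \<alpha> i - single j k i) else 0)"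
      using sum.delta'[OF fB, of "single j k" "\<lambda>\<beta>. f (\<lambda>i. \<alpha> i - \<beta> i)"] by (simp add: eq_commute)
    moreover have "(single j k \<in> B) = (k \<le> \<alpha> j)" by (auto simp: B_def single_def)
    moreover have "(\<lambda>i. \<alpha> i - single j k i) = \<alpha>(j := \<alpha> j - k)" by (auto simp: single_def)
    ultimately show "(\<Sum>\<beta>\<in>B. if \<beta> = single j k then f (\<lambda>i. \<alpha> i - \<beta> i) else 0) =
        (if k \<le> \<alpha> j then f (\<alpha>(j := \<alpha> j - k)) else 0)" by simp
  qed
  finally show ?thesis .
qed

lemma mult_ser_one_right:
  assumes "finite {k. \<alpha> k \<noteq> 0}"
  shows "mult_ser f one_ser \<alpha> = f \<alpha>"
proof -
  obtain m where m: "\<forall>k\<ge>m. \<alpha> k = 0" using finite_support_bound[OF assms] by blast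
  define B where "B = {\<beta>. \<forall>i. \<beta> i \<le> \<alpha> i}"
  have fB: "finite B" using finite_pointwise_le[OF m] B_def by simp
  have "mult_ser f one_ser \<alpha> = (\<Sum>\<beta>\<in>B. if \<beta> = \<alpha> then f \<beta> else 0)"
    unfolding mult_ser_def B_def[symmetric]
  proof (rule sum.cong[OF refl])
    fix \<beta> assume "\<beta> \<in> B"
    hence "((\<lambda>i. \<alpha> i - \<beta> i) = (\<lambda>_. 0)) = (\<beta> = \<alpha>)" by (auto simp: B_def fun_eq_iff le_antisym)
    thus "f \<beta> * one_ser (\<lambda>i. \<alpha> i - \<beta> i) = (if \<beta> = \<alpha> then f \<beta> else 0)"
      by (simp add: one_ser_def)
  qed
  also have "\<dots> = f \<alpha>" using sum.delta'[OF fB, of \<alpha> f] by (simp add: B_def eq_commute)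
  finally show ?thesis .
qed

lemma mult_ser_power_sum_one: "mult_ser (power_sum n) one_ser = power_sum n"
proof
  fix \<alpha> show "mult_ser (power_sum n) one_ser \<alpha> = power_sum n \<alpha>"
    by (cases "finite {k. \<alpha> k \<noteq> 0}") (simp_all add: mult_ser_one_right mult_ser_infinite power_sum_infinite)
qed

lemma mult_ser_sum: "finite A \<Longrightarrow> mult_ser f (\<lambda>\<alpha>. \<Sum>r\<in>A. g r \<alpha>) \<alpha> = (\<Sum>r\<in>A. mult_ser f (g r) \<alpha>)"
  unfolding mult_ser_def by (simp add: sum_distrib_left sum.swap[of _ A])

lemma mult_ser_power_sum_twice:
  assumes a: "1 \<le> a" and b: "1 \<le> b" and sup: "\<forall>k\<ge>m. \<alpha> k = 0"
  shows "mult_ser (power_sum a) (mult_ser (power_sum b) h) \<alpha> =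
    (\<Sum>j<m. \<Sum>i<m. if a \<le> \<alpha> j \<and> b \<le> (\<alpha>(j := \<alpha> j - a)) i
       then h ((\<alpha>(j := \<alpha> j - a))(i := (\<alpha>(j := \<alpha> j - a)) i - b)) else 0)"
  unfolding mult_ser_power_sum[OF a sup]
proof (rule sum.cong[OF refl])
  fix j
  have "\<forall>i\<ge>m. (\<alpha>(j := \<alpha> j - a)) i = 0" using sup by auto
  note inner = mult_ser_power_sum[OF b this, of h]
  show "(if a \<le> \<alpha> j then mult_ser (power_sum b) h (\<alpha>(j := \<alpha> j - a)) else 0) =
    (\<Sum>i<m. if a \<le> \<alpha> j \<and> b \<le> (\<alpha>(j := \<alpha> j - a)) i
       then h ((\<alpha>(j := \<alpha> j - a))(i := (\<alpha>(j := \<alpha> j - a)) i - b)) else 0)"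
    unfolding inner by (cases "a \<le> \<alpha> j") simp_all
qed

lemma mult_ser_power_sum_commute:
  assumes a: "1 \<le> a" and b: "1 \<le> b"
  shows "mult_ser (power_sum a) (mult_ser (power_sum b) h) = mult_ser (power_sum b) (mult_ser (power_sum a) h)"
proof (rule ext)
  fix \<alpha>
  show "mult_ser (power_sum a) (mult_ser (power_sum b) h) \<alpha> = mult_ser (power_sum b) (mult_ser (power_sum a) h) \<alpha>"
  proof (cases "finite {k. \<alpha> k \<noteq> 0}")
    case False thus ?thesis using mult_ser_infinite by simp
  next
    case True
    then obtain m where m: "\<forall>k\<ge>m. \<alpha> k = 0" using finite_support_bound by blast
    have swap: "(if a \<le> \<alpha> j \<and> b \<le> (\<alpha>(j := \<alpha> j - a)) i
         then h ((\<alpha>(j := \<alpha> j - a))(i := (\<alpha>(j := \<alpha> j - a)) i - b)) else 0) =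
        (if b \<le> \<alpha> i \<and> a \<le> (\<alpha>(i := \<alpha> i - b)) j
         then h ((\<alpha>(i := \<alpha> i - b))(j := (\<alpha>(i := \<alpha> i - b)) j - a)) else 0)" for i j
    proof (cases "i = j")
      case True
      have "(a \<le> \<alpha> j \<and> b \<le> \<alpha> j - a) = (b \<le> \<alpha> j \<and> a \<le> \<alpha> j - b)" by auto
      thus ?thesis using True by (simp add: add.commute)
    qed (auto simp: fun_upd_twist)
    show ?thesis
      unfolding mult_ser_power_sum_twice[OF a b m] mult_ser_power_sum_twice[OF b a m] swap
      by (rule sum.swap)
  qed
qed

lemma Hk_Suc: "Hk (Suc n) = (\<lambda>\<alpha>. mult_ser (power_sum 1) (Hk n) \<alpha> + power_sum (Suc n) \<alpha>)"
proof (rule ext)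
  fix \<alpha>
  have tail: "power_sum_part (hook (Suc n) (Suc r)) = mult_ser (power_sum 1) (power_sum_part (hook n r))"
    if r: "r < n" for r
  proof -
    have "power_sum_part (hook (Suc n) (Suc r)) =
        mult_ser (power_sum (n - r)) (mult_ser (power_sum 1) (power_sum_part (replicate r 1)))"
      using r by (simp add: power_sum_part_def hook_def)
    also have "\<dots> = mult_ser (power_sum 1) (mult_ser (power_sum (n - r)) (power_sum_part (replicate r 1)))"
      using mult_ser_power_sum_commute[of "n - r" 1] r by simp
    finally show ?thesis using r by (simp add: power_sum_part_def hook_def)
  qed
  have "Hk (Suc n) \<alpha> = power_sum_part (hook (Suc n) 0) \<alpha> + (\<Sum>r<n. power_sum_part (hook (Suc n) (Suc r)) \<alpha>)"
    unfolding Hk_def by (rule sum.lessThan_Suc_shift)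
  also have "power_sum_part (hook (Suc n) 0) = power_sum (Suc n)"
    using mult_ser_power_sum_one[of "Suc n"] by (simp add: power_sum_part_def hook_def)
  also have "(\<Sum>r<n. power_sum_part (hook (Suc n) (Suc r)) \<alpha>) = mult_ser (power_sum 1) (Hk n) \<alpha>"
    using tail mult_ser_sum[of "{..<n}" "power_sum 1" "\<lambda>r. power_sum_part (hook n r)" \<alpha>]
    by (simp add: Hk_def[abs_def])
  finally show "Hk (Suc n) \<alpha> = mult_ser (power_sum 1) (Hk n) \<alpha> + power_sum (Suc n) \<alpha>" by simp
qed

section \<open>The Schur expansion of \<open>Hk_n\<close>\<close>

definition power_sum_coeff :: "nat \<Rightarrow> nat list \<Rightarrow> int" where
  "power_sum_coeff N la = (\<Sum>i<N. if la = hook N i then (-1)^i else 0)"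

text \<open>The coefficient of \<open>s_la\<close> in \<open>Hk_n\<close>, following the recursion \<open>Hk_(n+1) = p_1 Hk_n + p_(n+1)\<close>.\<close>
primrec Hk_coeff :: "nat \<Rightarrow> nat list \<Rightarrow> int" where
  "Hk_coeff 0 la = 0"
| "Hk_coeff (Suc n) la = (\<Sum>mu\<in>{mu \<in> partitions n. la \<in> upper_covers mu}. Hk_coeff n mu) + power_sum_coeff (Suc n) la"

lemma power_sum_coeff_hook: "i < N \<Longrightarrow> power_sum_coeff N (hook N i) = (-1)^i"
  by (simp add: power_sum_coeff_def)

lemma power_sum_coeff_non_hook: "\<forall>i<N. la \<noteq> hook N i \<Longrightarrow> power_sum_coeff N la = 0"
  unfolding power_sum_coeff_def by simp

lemma power_sum_schur_expansion:
  assumes "1 \<le> N"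
  shows "power_sum N \<alpha> = (\<Sum>la\<in>partitions N. power_sum_coeff N la * int (kostka la \<alpha>))"
proof -
  have "(\<Sum>la\<in>partitions N. power_sum_coeff N la * int (kostka la \<alpha>)) =
      (\<Sum>i<N. \<Sum>la\<in>partitions N. if la = hook N i then (-1)^i * int (kostka la \<alpha>) else 0)"
    unfolding power_sum_coeff_def sum_distrib_right by (subst sum.swap) (intro sum.cong refl; simp)
  also have "\<dots> = (\<Sum>i<N. (-1)^i * int (kostka (hook N i) \<alpha>))"
    using hook_partitions by (intro sum.cong refl) (simp add: sum.delta[OF finite_partitions])
  finally show ?thesis using power_sum_hook_expansion[OF assms] by simp
qed

lemma mult_ser_p1_schur_expansion:
  "mult_ser (power_sum 1) (\<lambda>\<alpha>. \<Sum>mu\<in>partitions n. c mu * int (kostka mu \<alpha>)) \<alpha> =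
    (\<Sum>la\<in>partitions (Suc n). (\<Sum>mu\<in>{mu \<in> partitions n. la \<in> upper_covers mu}. c mu) * int (kostka la \<alpha>))"
proof (cases "finite {k. \<alpha> k \<noteq> 0}")
  case False
  thus ?thesis using mult_ser_infinite[OF False] kostka_infinite[OF False] by simp
next
  case True
  then obtain m where m: "\<forall>k\<ge>m. \<alpha> k = 0" using finite_support_bound by blast
  have "mult_ser (power_sum 1) (\<lambda>\<alpha>. \<Sum>mu\<in>partitions n. c mu * int (kostka mu \<alpha>)) \<alpha> =
      (\<Sum>j<m. \<Sum>mu\<in>partitions n. c mu * int (if 1 \<le> \<alpha> j then kostka mu (\<alpha>(j := \<alpha> j - 1)) else 0))"
    unfolding mult_ser_power_sum[OF order_refl m] by (intro sum.cong) auto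
  also have "\<dots> = (\<Sum>mu\<in>partitions n. c mu * int (\<Sum>j<m. if 1 \<le> \<alpha> j then kostka mu (\<alpha>(j := \<alpha> j - 1)) else 0))"
    by (subst sum.swap) (simp add: sum_distrib_left)
  also have "\<dots> = (\<Sum>mu\<in>partitions n. \<Sum>la\<in>{la \<in> partitions (Suc n). la \<in> upper_covers mu}. c mu * int (kostka la \<alpha>))"
  proof (intro sum.cong refl)
    fix mu assume mu: "mu \<in> partitions n"
    hence "{la \<in> partitions (Suc n). la \<in> upper_covers mu} = upper_covers mu"
      using upper_covers_subset by blast
    thus "c mu * int (\<Sum>j<m. if 1 \<le> \<alpha> j then kostka mu (\<alpha>(j := \<alpha> j - 1)) else 0) =
        (\<Sum>la\<in>{la \<in> partitions (Suc n). la \<in> upper_covers mu}. c mu * int (kostka la \<alpha>))"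
      using pieri_kostka[OF m] mu by (simp add: partitions_def sum_distrib_left)
  qed
  also have "\<dots> = (\<Sum>la\<in>partitions (Suc n). \<Sum>mu\<in>{mu \<in> partitions n. la \<in> upper_covers mu}. c mu * int (kostka la \<alpha>))"
    using sum.swap_restrict[OF finite_partitions finite_partitions] by simp
  finally show ?thesis by (simp add: sum_distrib_right)
qed

lemma Hk_schur_expansion: "Hk n = (\<lambda>\<alpha>. \<Sum>la\<in>partitions n. Hk_coeff n la * int (kostka la \<alpha>))"
proof (induction n)
  case 0
  show ?case by (rule ext) (simp add: Hk_def)
next
  case (Suc n)
  have pos: "1 \<le> Suc n" by simp
  show ?case
    unfolding Hk_Suc Suc.IH mult_ser_p1_schur_expansion power_sum_schur_expansion[OF pos]
    by (simp add: sum.distrib[symmetric] distrib_right)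
qed

lemma lower_covers_hook:
  assumes n: "1 \<le> n" and i: "i \<le> n"
  shows "{mu \<in> partitions n. hook (Suc n) i \<in> upper_covers mu} =
    (if i < n then {hook n i} else {}) \<union> (if 1 \<le> i then {hook n (i - 1)} else {})"
proof -
  have sh: "sum_list (hook (Suc n) i) = Suc n" using i by (simp add: hook_def sum_list_replicate)
  have "{mu \<in> partitions n. hook (Suc n) i \<in> upper_covers mu} = strip_removals (hook (Suc n) i) 1"
    using sh is_partition_hook[of i "Suc n"] i
    by (auto simp: partitions_def upper_covers_def strip_removals_def dest: sum_list_partition)
  also have "\<dots> = (if i < n then {hook n i} else {}) \<union> (if 1 \<le> i then {hook n (i - 1)} else {})"
    using strip_removals_hook[of i "Suc n" 1] i n by auto
  finally show ?thesis .
qed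

lemma Hk_coeff_Suc_hook:
  assumes n: "1 \<le> n" and i: "i \<le> n"
  shows "Hk_coeff (Suc n) (hook (Suc n) i) =
    (if i < n then Hk_coeff n (hook n i) else 0) + (if 1 \<le> i then Hk_coeff n (hook n (i - 1)) else 0) + (-1)^i"
  using i power_sum_coeff_hook[of i "Suc n"]
  by (cases "1 \<le> i") (auto simp: lower_covers_hook[OF n i] sum.union_disjoint)

lemma Hk_coeff_one_column: "1 \<le> n \<Longrightarrow> Hk_coeff n (replicate n 1) = (if odd n then 1 else 0)"
proof (induction n rule: nat_induct_at_least)
  case base
  show ?case using power_sum_coeff_hook[of 0 1] by (simp add: hook_def partitions_def)
next
  case (Suc n)
  thus ?case
    using Hk_coeff_Suc_hook[OF Suc.hyps order_refl] replicate_one_eq_hook[of n] replicate_one_eq_hook[of "Suc n"]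
    by simp
qed

lemma Hk_coeff_two_columns:
  "2 \<le> n \<Longrightarrow> Hk_coeff n (hook n (n - 2)) = (if even n then int (n div 2) + 1 else int ((n - 1) div 2))"
proof (induction n rule: nat_induct_at_least)
  case base
  show ?case
    using Hk_coeff_Suc_hook[of 1 0] Hk_coeff_one_column[of 1] by (simp add: numeral_2_eq_2 hook_def)
next
  case (Suc n)
  have "Hk_coeff (Suc n) (hook (Suc n) (Suc n - 2)) = Hk_coeff n (hook n (n - 1)) + Hk_coeff n (hook n (n - 2)) + (-1)^(n - 1)"
  proof -
    have "n - 1 < n" "1 \<le> n - 1" "n - 1 - 1 = n - 2" "Suc n - 2 = n - 1" using Suc.hyps by auto
    thus ?thesis using Hk_coeff_Suc_hook[of n "n - 1"] Suc.hyps by simp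
  qed
  also have "Hk_coeff n (hook n (n - 1)) = (if odd n then 1 else 0)"
    using Hk_coeff_one_column[of n] replicate_one_eq_hook[of n] Suc.hyps by simp
  finally show ?case
    using Suc.IH Suc.hyps by (cases "even n") (auto elim!: evenE oddE simp: power_mult)
qed

lemma remove_last_row_box:
  assumes la: "is_partition (Suc n) la" and two: "2 \<le> row_len la 1"
  obtains mu where "mu \<in> partitions n" "la \<in> upper_covers mu" "mu \<noteq> replicate n 1"
proof -
  define L where "L = length la"
  define f where "f = (\<lambda>k. row_len la k - single (L - 1) 1 k)"
  have L2: "2 \<le> L" using two row_len_pos_iff[OF la, of 1] L_def by simp
  have last: "1 \<le> row_len la (L - 1)"
    using row_len_pos_iff[OF la, of "L - 1"] L2 L_def by (simp add: Suc_le_eq)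
  have beyond: "row_len la L = 0" by (simp add: row_len_def L_def)
  have df: "antimono f" unfolding antimono_iff_le_Suc
  proof
    fix k
    show "f (Suc k) \<le> f k"
    proof (cases "k = L - 1")
      case True
      thus ?thesis using L2 beyond by (simp add: f_def)
    next
      case False
      thus ?thesis using antimonoD[OF antimono_row_len[OF la], of k "Suc k"] by (auto simp: f_def single_def)
    qed
  qed
  have zf: "\<forall>k\<ge>L. f k = 0" by (auto simp: f_def row_len_def L_def)
  obtain mu where mu: "is_partition (\<Sum>k<L. f k) mu" and row_mu: "row_len mu = f"
    using partition_with_row_len[OF df zf] .
  have "(\<Sum>k<L. f k) = n"
    using sum_diff_single[of "L - 1" L "row_len la"] last L2 sum_list_eq_sum_row_len[of la L]
      sum_list_partition[OF la] L_def by (simp add: f_def)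
  hence mu: "is_partition n mu" using mu by simp
  have "horiz_strip mu la"
    using interlaces_remove_box[OF antimono_row_len[OF la]] df row_mu by (simp add: horiz_strip_def f_def)
  hence "la \<in> upper_covers mu" using la sum_list_partition[OF mu] by (simp add: upper_covers_def partitions_def)
  moreover have "row_len mu 0 = row_len la 0" using row_mu L2 by (simp add: f_def single_def)
  hence "2 \<le> row_len mu 0" using two antimonoD[OF antimono_row_len[OF la], of 0 1] by simp
  hence "mu \<noteq> replicate n 1" by (auto simp: row_len_def split: if_splits)
  ultimately show ?thesis using that mu by (simp add: partitions_def)
qed

lemma Hk_coeff_Suc_hook_pos:
  assumes n: "1 \<le> n" and i: "i \<le> n"
    and nonneg: "\<forall>mu\<in>partitions n. 0 \<le> Hk_coeff n mu"
    and pos: "\<forall>mu\<in>partitions n. mu \<noteq> replicate n 1 \<longrightarrow> 1 \<le> Hk_coeff n mu"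
  shows "0 \<le> Hk_coeff (Suc n) (hook (Suc n) i) \<and> (i < n \<longrightarrow> 1 \<le> Hk_coeff (Suc n) (hook (Suc n) i))"
proof -
  note rec = Hk_coeff_Suc_hook[OF n i]
  have hook_pos: "1 \<le> Hk_coeff n (hook n j)" if "j < n - 1" for j
    using pos hook_partitions[of j n] that replicate_one_eq_hook[OF n] by auto
  show ?thesis
  proof (cases "even i")
    case True
    have "0 \<le> Hk_coeff n (hook n i)" if "i < n" using nonneg hook_partitions that by blast
    moreover have "0 \<le> Hk_coeff n (hook n (i - 1))" if "1 \<le> i" using nonneg hook_partitions n i that by simp
    ultimately show ?thesis using rec True by auto
  next
    case odd: False
    hence i1: "1 \<le> i" by (cases i) auto
    consider "i = n" | "i < n - 1" | "i = n - 1" "i < n" using i by linarith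
    thus ?thesis
    proof cases
      case 1
      thus ?thesis
        using rec odd n Hk_coeff_one_column[OF n] replicate_one_eq_hook[OF n] by simp
    next
      case 2
      hence "1 \<le> Hk_coeff n (hook n i)" "1 \<le> Hk_coeff n (hook n (i - 1))" using hook_pos i1 by auto
      moreover have "i < n" using 2 by simp
      ultimately show ?thesis using rec odd i1 by simp
    next
      case 3
      hence "even n" "2 \<le> n" using odd i1 by auto
      have "Hk_coeff n (hook n i) = 0"
        using 3 \<open>even n\<close> Hk_coeff_one_column[OF n] replicate_one_eq_hook[OF n] by simp
      moreover have "i - 1 = n - 2" using 3 by simp
      hence "Hk_coeff n (hook n (i - 1)) = int (n div 2) + 1"
        using Hk_coeff_two_columns[OF \<open>2 \<le> n\<close>] \<open>even n\<close> by simp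
      moreover have "1 \<le> n div 2" using \<open>2 \<le> n\<close> by simp
      ultimately show ?thesis using rec odd 3 i1 by simp
    qed
  qed
qed

lemma Hk_coeff_Suc_non_hook_pos:
  assumes la: "la \<in> partitions (Suc n)" and nh: "\<forall>i<Suc n. la \<noteq> hook (Suc n) i"
    and nonneg: "\<forall>mu\<in>partitions n. 0 \<le> Hk_coeff n mu"
    and pos: "\<forall>mu\<in>partitions n. mu \<noteq> replicate n 1 \<longrightarrow> 1 \<le> Hk_coeff n mu"
  shows "1 \<le> Hk_coeff (Suc n) la"
proof -
  have lap: "is_partition (Suc n) la" using la by (simp add: partitions_def)
  hence "la \<noteq> []" by (auto simp: is_partition_def)
  then obtain mu where mu: "mu \<in> partitions n" "la \<in> upper_covers mu" "mu \<noteq> replicate n 1"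
    using remove_last_row_box[OF lap non_hook_second_row[OF lap _ nh]] by blast
  have "Hk_coeff n mu \<le> (\<Sum>mu\<in>{mu \<in> partitions n. la \<in> upper_covers mu}. Hk_coeff n mu)"
    using mu nonneg finite_partitions by (intro member_le_sum) auto
  thus ?thesis using pos mu power_sum_coeff_non_hook[OF nh] by fastforce
qed

lemma partitions_one: "partitions 1 = {replicate 1 1}"
proof -
  have "la = [1]" if la: "is_partition 1 la" for la
  proof (cases la)
    case (Cons a xs)
    hence "a + sum_list xs = 1" "0 < a" "0 \<notin> set xs" using la by (auto simp: is_partition_def)
    hence "a = 1" "sum_list xs = 0" by arith+
    thus ?thesis using Cons \<open>0 \<notin> set xs\<close> by (cases xs) auto
  qed (use la in \<open>simp add: is_partition_def\<close>)
  thus ?thesis by (auto simp: partitions_def is_partition_def)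
qed

lemma Hk_coeff_pos:
  assumes "1 \<le> n"
  shows "(\<forall>la\<in>partitions n. 0 \<le> Hk_coeff n la) \<and> (\<forall>la\<in>partitions n. la \<noteq> replicate n 1 \<longrightarrow> 1 \<le> Hk_coeff n la)"
  using assms
proof (induction n rule: nat_induct_at_least)
  case base
  show ?case using Hk_coeff_one_column[of 1] partitions_one by simp
next
  case (Suc n)
  have "0 \<le> Hk_coeff (Suc n) la \<and> (la \<noteq> replicate (Suc n) 1 \<longrightarrow> 1 \<le> Hk_coeff (Suc n) la)"
    if la: "la \<in> partitions (Suc n)" for la
  proof (cases "\<exists>i<Suc n. la = hook (Suc n) i")
    case True
    then obtain i where "i \<le> n" "la = hook (Suc n) i" by auto
    thus ?thesis using Hk_coeff_Suc_hook_pos[OF Suc.hyps _ Suc.IH[THEN conjunct1] Suc.IH[THEN conjunct2]]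
      replicate_one_eq_hook[of "Suc n"] by (cases "i = n") auto
  next
    case False
    thus ?thesis using Hk_coeff_Suc_non_hook_pos[OF la _ Suc.IH[THEN conjunct1] Suc.IH[THEN conjunct2]]
      by auto
  qed
  thus ?case by blast
qed

theorem proposition2p18:
  fixes n :: nat
  assumes "n \<ge> 1"
  shows "\<exists>c :: nat list \<Rightarrow> nat.
           Hk n = (%\<alpha>. \<Sum>la\<in>{la. is_partition n la}. int (c la) * schur la \<alpha>)
         \<and> (odd n \<longrightarrow> (\<forall>la. is_partition n la \<longrightarrow> c la > 0))
         \<and> (even n \<longrightarrow> (\<forall>la. is_partition n la \<longrightarrow> la \<noteq> replicate n 1 \<longrightarrow> c la > 0)
                        \<and> c (replicate n 1) = 0)"
proof -
  define c where "c la = nat (Hk_coeff n la)" for la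
  note pos = Hk_coeff_pos[OF assms, unfolded partitions_def, simplified]
  have "int (c la) * schur la \<alpha> = Hk_coeff n la * int (kostka la \<alpha>)" if "is_partition n la" for la \<alpha>
    using pos that by (simp add: c_def schur_def kostka_def)
  hence "Hk n = (\<lambda>\<alpha>. \<Sum>la\<in>{la. is_partition n la}. int (c la) * schur la \<alpha>)"
    unfolding Hk_schur_expansion partitions_def by simp
  moreover have "c (replicate n 1) = (if odd n then 1 else 0)"
    using Hk_coeff_one_column[OF assms] by (simp add: c_def)
  moreover have "c la > 0" if "is_partition n la" "la \<noteq> replicate n 1" for la
    using pos that by (fastforce simp: c_def)
  ultimately show ?thesis by (metis zero_less_one)
qed

end
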